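(* Let $V$ be a real vector space of dimension $m\ge3$ with a positive definite inner product $\langle\cdot,\cdot\rangle$, and let $R$ be an algebraic curvature tensor on $V$ with Jacobi operator $J$. \begin{enumerate} \item If $J(x)J(y)=J(y)J(x)$ for all $x,y\in V$, then $R=0$. \item $R_0$ is Jacobi-Tsankov, and for every Hermitian almost complex structure $\Theta$ on $V$, $R_\Theta$ is Jacobi-Tsankov. \item If $R$ is Jacobi-Tsankov, then either $R=cR_0$ for some $c\in\mathbb{R}$, or $R=cR_\Theta$ for some $c\in\mathbb{R}$ and some Hermitian almost complex structure $\Theta$ on $V$. \end{enumerate}
   Context: An algebraic curvature tensor is $R\in\otimes^4V^*$ satisfying $R(x,y,z,w)=R(z,w,x,y)=-R(y,x,z,w)$ and $R(x,y,z,w)+R(y,z,x,w)+R(z,x,y,w)=0$. The curvature operator $\mathcal{R}(x,y)$ is the endomorphism of $V$ with $\langle\mathcal{R}(x,y)z,w\rangle=R(x,y,z,w)$; the Jacobi operator is $J(x):y\mapsto\mathcal{R}(y,x)x$. $R$ is called Jacobi-Tsankov if $x\perp y$ implies $J(x)J(y)=J(y)J(x)$. $R_0$ is the tensor with curvature operator $R_0(x,y)z=\langle y,z\rangle x-\langle x,z\rangle y$. A Hermitian almost complex structure is a linear $\Theta:V\to V$ with $\Theta^2=-\mathrm{id}$ and $\Theta^*=-\Theta$; for such $\Theta$, $R_\Theta$ is the tensor with curvature operator $R_\Theta(x,y)z=\langle\Theta y,z\rangle\Theta x-\langle\Theta x,z\rangle\Theta y-2\langle\Theta x,y\rangle\Theta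 z$. *)

theory Defs
  imports "HOL-Analysis.Analysis"
begin

text \<open>V is modelled by a Euclidean space type 'a (finite-dimensional real inner product
space); a 4-tensor is a function 'a => 'a => 'a => 'a => real that is linear in each slot.\<close>

definition alg_curv_tensor :: "('a::euclidean_space \<Rightarrow> 'a \<Rightarrow> 'a \<Rightarrow> 'a \<Rightarrow> real) \<Rightarrow> bool" where
  "alg_curv_tensor R \<longleftrightarrow>
     (\<forall>y z w. linear (\<lambda>x. R x y z w)) \<and>
     (\<forall>x z w. linear (\<lambda>y. R x y z w)) \<and>
     (\<forall>x y w. linear (\<lambda>z. R x y z w)) \<and>
     (\<forall>x y z. linear (\<lambda>w. R x y z w)) \<and>
     (\<forall>x y z w. R x y z w = R z w x y) \<and>
     (\<forall>x y z w. R x y z w = - R y x z w) \<and>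
     (\<forall>x y z w. R x y z w + R y z x w + R z x y w = 0)"

text \<open>Curvature operator: the unique vector with inner product R(x,y,z,w) against every w.\<close>
definition curv_op :: "('a::euclidean_space \<Rightarrow> 'a \<Rightarrow> 'a \<Rightarrow> 'a \<Rightarrow> real) \<Rightarrow> 'a \<Rightarrow> 'a \<Rightarrow> 'a \<Rightarrow> 'a" where
  "curv_op R x y z = (\<Sum>b\<in>Basis. R x y z b *\<^sub>R b)"

definition jacobi_op :: "('a::euclidean_space \<Rightarrow> 'a \<Rightarrow> 'a \<Rightarrow> 'a \<Rightarrow> real) \<Rightarrow> 'a \<Rightarrow> 'a \<Rightarrow> 'a" where
  "jacobi_op R x = (\<lambda>y. curv_op R y x x)"

definition jacobi_tsankov :: "('a::euclidean_space \<Rightarrow> 'a \<Rightarrow> 'a \<Rightarrow> 'a \<Rightarrow> real) \<Rightarrow> bool" where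
  "jacobi_tsankov R \<longleftrightarrow>
     (\<forall>x y. inner x y = 0 \<longrightarrow> jacobi_op R x \<circ> jacobi_op R y = jacobi_op R y \<circ> jacobi_op R x)"

definition hermitian_acs :: "('a::euclidean_space \<Rightarrow> 'a) \<Rightarrow> bool" where
  "hermitian_acs \<Theta> \<longleftrightarrow> linear \<Theta> \<and> (\<forall>x. \<Theta> (\<Theta> x) = - x) \<and>
     (\<forall>x y. inner (\<Theta> x) y = - inner x (\<Theta> y))"

definition R0 :: "'a::euclidean_space \<Rightarrow> 'a \<Rightarrow> 'a \<Rightarrow> 'a \<Rightarrow> real" where
  "R0 x y z w = inner (inner y z *\<^sub>R x - inner x z *\<^sub>R y) w"

definition RTheta :: "('a::euclidean_space \<Rightarrow> 'a) \<Rightarrow> 'a \<Rightarrow> 'a \<Rightarrow> 'a \<Rightarrow> 'a \<Rightarrow> real" where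
  "RTheta \<Theta> x y z w = inner (inner (\<Theta> y) z *\<^sub>R \<Theta> x - inner (\<Theta> x) z *\<^sub>R \<Theta> y
                               - (2 * inner (\<Theta> x) y) *\<^sub>R \<Theta> z) w"

end

(*
  The Jacobi operators J x are self-adjoint and determine R. If all of them commute, then
  J x (J x z) = J x (J z x) - J x (J (x + z) x) = 0, so J x = 0; the model tensors R0 and R_Theta
  are checked directly.

  For a Jacobi-Tsankov tensor, J x and J y commute whenever x and y are orthogonal; playing
  this off against the eigenvectors of J x shows that a nonzero J x has a single nonzero
  eigenvalue l and that J v x is a multiple of x for every eigenvector v.

  If l has multiplicity at least two, the kernel of J x is spanned by x, so J x is the Jacobi
  operator of a multiple of R0 at x. This property passes from x to every vector orthogonal to
  it, hence (dim >= 3) to every vector, and then R = c R0.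

  Otherwise every J y has rank at most one. Fix a unit x0 with J x0 = l <-, v0> v0. For a unit
  f orthogonal to x0 and v0 the rank-one operators J (p + f) and J (p - f), p a unit vector in
  span {x0, v0}, commute; this forces J f = l <-, g> g and determines the polarization of J at
  (p, f) up to sign. The resulting map x0 -> v0, f -> g extends to a linear Hermitian almost
  complex structure Theta with J y = l <-, Theta y> Theta y, i.e. R = (l/3) R_Theta.
*)
theory Submission
  imports Defs
begin

lemma vector_eq_innerI: "(\<And>w. inner a w = inner b w) \<Longrightarrow> (a::'a::real_inner) = b"
  using vector_eq_rdot by blast

lemma scaleR_eq_imp_eq_divide:
  "(a::real) \<noteq> 0 \<Longrightarrow> a *\<^sub>R (y::'a::real_vector) = b *\<^sub>R x \<Longrightarrow> y = (b/a) *\<^sub>R x"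
proof -
  assume "a \<noteq> 0" and "a *\<^sub>R y = b *\<^sub>R x"
  have "y = (1/a) *\<^sub>R (a *\<^sub>R y)" using \<open>a \<noteq> 0\<close> by simp
  also have "\<dots> = (b/a) *\<^sub>R x" using \<open>a *\<^sub>R y = b *\<^sub>R x\<close> by simp
  finally show ?thesis .
qed

section \<open>Self-adjoint operators\<close>

lemma linear_le_quadratic_imp_zero:
  fixes a C :: real
  assumes "\<And>t. 2 * t * a \<le> t * t * C"
  shows "a = 0"
proof -
  define d where "d = \<bar>C\<bar> + 1"
  have d: "d > 0" "C < d" unfolding d_def by auto
  have "2 * (a/d) * a \<le> (a/d) * (a/d) * C" using assms .
  hence "2 * (a*a) * d \<le> (a*a) * C" using d
    by (simp add: field_simps power2_eq_square)
  moreover have "(a*a) * C \<le> (a*a) * d" using d by (intro mult_left_mono) auto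
  ultimately have "(a*a) * d \<le> 0" by linarith
  hence "a * a \<le> 0" using d by (simp add: mult_le_0_iff)
  thus ?thesis by (metis mult_eq_0_iff not_square_less_zero order_le_less)
qed

lemma rayleigh_max_exists:
  fixes A :: "'a::euclidean_space \<Rightarrow> 'a"
  assumes lin: "linear A" and S: "subspace S" and u0: "u0 \<in> S" "u0 \<noteq> 0"
  shows "\<exists>v\<in>S. norm v = 1 \<and> (\<forall>u\<in>S. inner (A u) u \<le> inner (A v) v * inner u u)"
proof -
  define K where "K = S \<inter> sphere 0 1"
  have "compact K" unfolding K_def
    by (intro closed_Int_compact closed_subspace S compact_sphere)
  moreover have "u0 /\<^sub>R norm u0 \<in> K" unfolding K_def using u0 S
    by (simp add: subspace_scale)
  moreover have "continuous_on K (\<lambda>u. inner (A u) u)"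
    using lin by (intro continuous_intros linear_continuous_on) (simp add: linear_conv_bounded_linear)
  ultimately obtain v where vK: "v \<in> K" and vmax: "\<And>u. u \<in> K \<Longrightarrow> inner (A u) u \<le> inner (A v) v"
    using continuous_attains_sup[of K "\<lambda>u. inner (A u) u"] by blast
  have "inner (A u) u \<le> inner (A v) v * inner u u" if uS: "u \<in> S" for u
  proof (cases "u = 0")
    case True thus ?thesis by (simp add: linear_0[OF lin])
  next
    case False
    have "u /\<^sub>R norm u \<in> K" unfolding K_def using uS False S by (simp add: subspace_scale)
    hence "inner (A (u /\<^sub>R norm u)) (u /\<^sub>R norm u) \<le> inner (A v) v" by (rule vmax)
    moreover have "inner (A (u /\<^sub>R norm u)) (u /\<^sub>R norm u) = inner (A u) u / (norm u)^2"
      using False by (simp add: linear_scale[OF lin] power2_eq_square field_simps)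
    moreover have "(norm u)^2 = inner u u" by (simp add: dot_square_norm)
    ultimately show ?thesis using False by (simp add: divide_le_eq mult.commute)
  qed
  thus ?thesis using vK unfolding K_def by auto
qed

text \<open>First-order condition at a maximum of the Rayleigh quotient: the derivative of
  \<open>t \<mapsto> \<langle>A(v + t w), v + t w\<rangle> - M |v + t w|\<^sup>2\<close> vanishes at \<open>t = 0\<close>.\<close>
lemma rayleigh_max_eigenvector:
  fixes A :: "'a::euclidean_space \<Rightarrow> 'a"
  assumes lin: "linear A" and sym: "\<And>u w. inner (A u) w = inner u (A w)"
    and S: "subspace S" and inv: "\<And>u. u \<in> S \<Longrightarrow> A u \<in> S"
    and vS: "v \<in> S" and nv: "norm v = 1"
    and max: "\<And>u. u \<in> S \<Longrightarrow> inner (A u) u \<le> inner (A v) v * inner u u"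
  shows "A v = inner (A v) v *\<^sub>R v"
proof -
  define M where "M = inner (A v) v"
  have vv: "inner v v = 1" using nv by (simp add: dot_square_norm)
  have orth: "inner (A v) w = 0" if wS: "w \<in> S" and wv: "inner w v = 0" for w
  proof -
    have "2 * t * inner (A v) w \<le> t * t * (M * inner w w - inner (A w) w)" for t
    proof -
      have "v + t *\<^sub>R w \<in> S" using vS wS S by (simp add: subspace_add subspace_scale)
      note max[OF this]
      moreover have "inner (A w) v = inner (A v) w" by (metis sym inner_commute)
      ultimately show ?thesis using vv wv unfolding M_def
        by (simp add: linear_add[OF lin] linear_scale[OF lin]
            inner_commute[of v w] algebra_simps)
    qed
    thus ?thesis by (rule linear_le_quadratic_imp_zero)
  qed
  define w where "w = A v - M *\<^sub>R v"
  have wS: "w \<in> S" unfolding w_def using vS inv S by (simp add: subspace_diff subspace_scale)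
  have wv: "inner w v = 0" unfolding w_def M_def using vv by (simp add: inner_diff_left)
  have "inner w w = inner (A v) w - M * inner w v" unfolding w_def
    by (simp add: inner_diff_left inner_commute)
  hence "w = 0" using orth[OF wS wv] wv by simp
  thus ?thesis unfolding w_def M_def by simp
qed

lemma selfadjoint_nonzero_eigenvector:
  fixes A :: "'a::euclidean_space \<Rightarrow> 'a"
  assumes lin: "linear A" and sym: "\<And>u w. inner (A u) w = inner u (A w)"
    and S: "subspace S" and inv: "\<And>u. u \<in> S \<Longrightarrow> A u \<in> S" and u0: "u0 \<in> S" "A u0 \<noteq> 0"
  shows "\<exists>w\<in>S. w \<noteq> 0 \<and> (\<exists>\<mu>. \<mu> \<noteq> 0 \<and> A w = \<mu> *\<^sub>R w)"
proof (rule ccontr)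
  assume no_eigvec: "\<not> ?thesis"
  have "u0 \<noteq> 0" using u0 lin by (auto simp: linear_0)
  have max_eigvec: "\<exists>v\<in>S. norm v = 1 \<and> B v = inner (B v) v *\<^sub>R v \<and>
      (\<forall>u\<in>S. inner (B u) u \<le> inner (B v) v * inner u u)"
    if "linear B" "\<And>u w. inner (B u) w = inner u (B w)" "\<And>u. u \<in> S \<Longrightarrow> B u \<in> S" for B
    using rayleigh_max_exists[OF that(1) S u0(1) \<open>u0 \<noteq> 0\<close>]
      rayleigh_max_eigenvector[OF that(1,2) S that(3)] by blast
  obtain v where "v \<in> S" "norm v = 1" "A v = inner (A v) v *\<^sub>R v"
    and vmax: "\<forall>u\<in>S. inner (A u) u \<le> inner (A v) v * inner u u"
    using max_eigvec[OF lin sym inv] by blast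
  hence "inner (A v) v = 0" using no_eigvec by (metis norm_zero zero_neq_one)
  obtain v' where "v' \<in> S" "norm v' = 1" "- A v' = inner (- A v') v' *\<^sub>R v'"
    and v'max: "\<forall>u\<in>S. inner (- A u) u \<le> inner (- A v') v' * inner u u"
    using max_eigvec[of "\<lambda>u. - A u"] lin sym inv S
    by (auto simp: linear_compose_neg subspace_neg)
  hence "A v' = inner (A v') v' *\<^sub>R v'" "v' \<in> S" "norm v' = 1" by simp_all
  hence "inner (A v') v' = 0" using no_eigvec by (metis norm_zero zero_neq_one)
  have zero: "inner (A u) u = 0" if "u \<in> S" for u
  proof -
    have "inner (A u) u \<le> 0" using vmax that \<open>inner (A v) v = 0\<close> by simp
    moreover have "- inner (A u) u \<le> 0" using v'max that \<open>inner (A v') v' = 0\<close> by simp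
    ultimately show ?thesis by linarith
  qed
  have "u0 + A u0 \<in> S" using u0 inv S by (simp add: subspace_add)
  have "inner (A (u0 + A u0)) (u0 + A u0)
      = inner (A u0) u0 + 2 * inner (A u0) (A u0) + inner (A (A u0)) (A u0)"
    by (simp add: linear_add[OF lin] inner_add_left inner_add_right sym inner_commute)
  hence "inner (A u0) (A u0) = 0"
    using zero[OF \<open>u0 + A u0 \<in> S\<close>] zero[OF u0(1)] zero[OF inv[OF u0(1)]] by simp
  thus False using u0 by simp
qed

section \<open>Algebraic curvature tensors and Jacobi operators\<close>

locale curvature_tensor =
  fixes R :: "'a::euclidean_space \<Rightarrow> 'a \<Rightarrow> 'a \<Rightarrow> 'a \<Rightarrow> real"
  assumes alg_curv: "alg_curv_tensor R"
begin

lemma R_linear1: "linear (\<lambda>x. R x y z w)"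
  using alg_curv unfolding alg_curv_tensor_def by fast

lemma R_linear2: "linear (\<lambda>y. R x y z w)"
  using alg_curv unfolding alg_curv_tensor_def by fast

lemma R_linear3: "linear (\<lambda>z. R x y z w)"
  using alg_curv unfolding alg_curv_tensor_def by fast

lemma R_linear4: "linear (\<lambda>w. R x y z w)"
  using alg_curv unfolding alg_curv_tensor_def by blast

lemmas R_linear = R_linear1 R_linear2 R_linear3 R_linear4

lemma R_pair_sym: "R x y z w = R z w x y"
  using alg_curv unfolding alg_curv_tensor_def by blast

lemma R_antisym: "R x y z w = - R y x z w"
  using alg_curv unfolding alg_curv_tensor_def by blast

lemma R_bianchi: "R x y z w + R y z x w + R z x y w = 0"
  using alg_curv unfolding alg_curv_tensor_def by blast

lemma R_antisym': "R x y z w = - R x y w z"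
  by (metis R_antisym R_pair_sym)

lemmas R_add [simp] = R_linear[THEN linear_add]

lemmas R_diff [simp] = R_linear[THEN linear_diff]

lemmas R_scale [simp] = R_linear[THEN linear_scale]

lemmas R_neg [simp] = R_linear[THEN linear_neg]

lemmas R_zero [simp] = R_linear[THEN linear_0]

lemma R_same_12 [simp]: "R x x z w = 0"
  using R_antisym[of x x z w] by simp

lemma R_same_34 [simp]: "R x y z z = 0"
  using R_antisym'[of x y z z] by simp

lemma inner_curv_op [simp]: "inner (curv_op R x y z) w = R x y z w"
proof -
  have "inner (curv_op R x y z) w = (\<Sum>b\<in>Basis. R x y z b * inner b w)"
    unfolding curv_op_def by (simp add: inner_sum_left)
  also have "\<dots> = R x y z (\<Sum>b\<in>Basis. inner w b *\<^sub>R b)"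
    by (simp add: linear_sum[OF R_linear4] inner_commute mult.commute)
  finally show ?thesis by (simp add: euclidean_representation)
qed

abbreviation J :: "'a \<Rightarrow> 'a \<Rightarrow> 'a" where
  "J \<equiv> jacobi_op R"

definition Jpol :: "'a \<Rightarrow> 'a \<Rightarrow> 'a \<Rightarrow> 'a" where
  "Jpol x y z = curv_op R z x y + curv_op R z y x"

lemma inner_J [simp]: "inner (J x z) w = R z x x w"
  by (simp add: jacobi_op_def)

lemma inner_Jpol [simp]: "inner (Jpol x y z) w = R z x y w + R z y x w"
  by (simp add: Jpol_def inner_add_left)

lemma J_selfadjoint: "inner (J x z) w = inner z (J x w)"
  by (metis inner_J inner_commute R_antisym R_antisym' R_pair_sym)

lemma inner_J_swap: "inner (J x z) z = inner (J z x) x"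
  by (metis inner_J R_antisym R_antisym')

lemma J_linear: "linear (J x)"
  by (rule linearI; rule vector_eq_innerI; simp add: inner_add_left)

lemmas J_lin_simps = linear_add[OF J_linear] linear_diff[OF J_linear] linear_scale[OF J_linear]
  linear_0[OF J_linear] linear_neg[OF J_linear]

lemma J_self [simp]: "J x x = 0"
  by (rule vector_eq_innerI) simp

lemma inner_J_self [simp]: "inner (J x z) x = 0" "inner x (J x z) = 0"
  by (simp_all add: inner_commute[of x])

lemma J_zero_left [simp]: "J 0 z = 0"
  by (rule vector_eq_innerI) simp

lemma J_scale_left: "J (c *\<^sub>R x) z = (c * c) *\<^sub>R J x z"
  by (rule vector_eq_innerI) simp

lemma J_add_left: "J (x + y) z = J x z + Jpol x y z + J y z"
  by (rule vector_eq_innerI) (simp add: inner_add_left)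

lemma J_diff_left: "J (x - y) z = J x z - Jpol x y z + J y z"
  by (rule vector_eq_innerI) (simp add: inner_add_left inner_diff_left)

lemma Jpol_commute: "Jpol x y z = Jpol y x z"
  by (rule vector_eq_innerI) simp

lemma Jpol_self: "Jpol x x z = 2 *\<^sub>R J x z"
  by (rule vector_eq_innerI) simp

lemma Jpol_first: "Jpol x y x = - J x y"
  by (rule vector_eq_innerI) (simp add: R_antisym[of x y])

lemma Jpol_linear: "linear (Jpol x y)"
  by (rule linearI; rule vector_eq_innerI; simp add: algebra_simps)

lemma Jpol_add_left: "Jpol (a + b) y z = Jpol a y z + Jpol b y z"
  by (rule vector_eq_innerI) (simp add: inner_add_left)

lemma Jpol_scale_left: "Jpol (c *\<^sub>R a) y z = c *\<^sub>R Jpol a y z"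
  by (rule vector_eq_innerI) (simp add: algebra_simps)

lemma Jpol_scale_right: "Jpol x (c *\<^sub>R a) z = c *\<^sub>R Jpol x a z"
  by (rule vector_eq_innerI) (simp add: algebra_simps)

end

lemma alg_curv_tensor_eqI:
  assumes R1: "alg_curv_tensor R1" and R2: "alg_curv_tensor R2"
    and eq: "\<And>z y w. R1 z y y w = R2 z y y w"
  shows "R1 = R2"
proof -
  interpret R1: curvature_tensor R1 by (rule curvature_tensor.intro[OF R1])
  interpret R2: curvature_tensor R2 by (rule curvature_tensor.intro[OF R2])
  define D where "D = (\<lambda>x y z w. R1 x y z w - R2 x y z w)"
  have antisym_23: "D z y u w = - D z u y w" for z y u w
    using eq[of z "y + u" w] eq[of z y w] eq[of z u w] unfolding D_def by simp
  have antisym_12: "D x y z w = - D y x z w" for x y z w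
    unfolding D_def using R1.R_antisym[of x y z w] R2.R_antisym[of x y z w] by simp
  have bianchi: "D x y z w + D y z x w + D z x y w = 0" for x y z w
    unfolding D_def using R1.R_bianchi[of x y z w] R2.R_bianchi[of x y z w] by simp
  have "D x y z w = 0" for x y z w
    using bianchi[of x y z w] antisym_23[of y z x w] antisym_12[of y x z w]
      antisym_12[of z x y w] antisym_23[of x z y w] by simp
  thus ?thesis unfolding D_def by (intro ext) simp
qed

lemma alg_curv_tensor_scale:
  assumes "alg_curv_tensor R"
  shows "alg_curv_tensor (\<lambda>x y z w. c * R x y z w)"
proof -
  interpret curvature_tensor R by (rule curvature_tensor.intro[OF assms])
  have "linear (\<lambda>x. c * R x y z w)" "linear (\<lambda>y. c * R x y z w)"
    "linear (\<lambda>z. c * R x y z w)" "linear (\<lambda>w. c * R x y z w)" for x y z w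
    by (rule linearI; simp add: algebra_simps)+
  moreover have "c * R x y z w + c * R y z x w + c * R z x y w = 0" for x y z w
    using R_bianchi[of x y z w] by (simp add: distrib_left[symmetric])
  moreover have "c * R x y z w = c * R z w x y" for x y z w
    using R_pair_sym[of x y z w] by simp
  moreover have "c * R x y z w = - (c * R y x z w)" for x y z w
    using R_antisym[of x y z w] by simp
  ultimately show ?thesis unfolding alg_curv_tensor_def by blast
qed

lemma (in curvature_tensor) J_eq_0_imp_R_eq_0:
  assumes "\<And>x z. J x z = 0"
  shows "R = (\<lambda>x y z w. 0)"
proof -
  have "R = (\<lambda>x y z w. 0 * R x y z w)"
  proof (rule alg_curv_tensor_eqI[OF alg_curv alg_curv_tensor_scale[OF alg_curv]])
    fix z y w
    show "R z y y w = 0 * R z y y w" using inner_J[of y z w] assms by simp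
  qed
  thus ?thesis by simp
qed

lemma (in curvature_tensor) jacobi_commuting_imp_zero:
  assumes comm: "\<forall>x y. J x \<circ> J y = J y \<circ> J x"
  shows "R = (\<lambda>x y z w. 0)"
proof (rule J_eq_0_imp_R_eq_0)
  fix x z
  have kill: "J x (J y x) = 0" for y
  proof -
    have "J x (J y x) = J y (J x x)" using comm by (metis comp_apply)
    thus ?thesis by (simp add: J_lin_simps)
  qed
  have "J x (J x z) = J x (J z x) - J x (J (x + z) x)"
    by (simp add: J_add_left Jpol_first J_lin_simps)
  hence "J x (J x z) = 0" using kill by simp
  hence "inner (J x z) (J x z) = 0" by (metis J_selfadjoint inner_zero_right)
  thus "J x z = 0" by (simp only: inner_eq_zero_iff)
qed

section \<open>The model tensors\<close>

lemma R0_expand: "R0 x y z w = inner y z * inner x w - inner x z * inner y w"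
  unfolding R0_def by (simp add: inner_diff_left)

lemma alg_curv_tensor_R0: "alg_curv_tensor (R0 :: 'a::euclidean_space \<Rightarrow> _)"
proof -
  have "linear (\<lambda>x. R0 x y z w)" "linear (\<lambda>y. R0 x y z w)"
    "linear (\<lambda>z. R0 x y z w)" "linear (\<lambda>w. R0 x y z w)" for x y z w :: 'a
    by (rule linearI; simp add: R0_expand algebra_simps)+
  moreover have "R0 x y z w = R0 z w x y" "R0 x y z w = - R0 y x z w"
    "R0 x y z w + R0 y z x w + R0 z x y w = 0" for x y z w :: 'a
    by (simp_all add: R0_expand inner_commute algebra_simps)
  ultimately show ?thesis unfolding alg_curv_tensor_def by blast
qed

lemma jacobi_op_R0: "jacobi_op R0 x z = inner x x *\<^sub>R z - inner z x *\<^sub>R x"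
proof -
  interpret curvature_tensor R0 by (rule curvature_tensor.intro[OF alg_curv_tensor_R0])
  show ?thesis by (rule vector_eq_innerI) (simp add: R0_def)
qed

lemma jacobi_tsankov_R0: "jacobi_tsankov (R0 :: 'a::euclidean_space \<Rightarrow> _)"
  unfolding jacobi_tsankov_def
proof (intro allI impI ext)
  fix x y z :: 'a
  assume "inner x y = 0"
  thus "(jacobi_op R0 x \<circ> jacobi_op R0 y) z = (jacobi_op R0 y \<circ> jacobi_op R0 x) z"
    by (simp add: jacobi_op_R0 inner_commute[of y x] algebra_simps)
qed

lemma hermitian_acsD:
  assumes "hermitian_acs T"
  shows "linear T" "T (T x) = - x" "inner (T x) y = - inner x (T y)"
    "inner (T x) y = - inner (T y) x" "inner (T x) x = 0"
proof -
  show "linear T" "T (T x) = - x" and skew: "inner (T x) y = - inner x (T y)" for x y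
    using assms unfolding hermitian_acs_def by auto
  thus "inner (T x) y = - inner (T y) x" for x y by (metis inner_commute)
  thus "inner (T x) x = 0" by (metis neg_equal_zero)
qed

lemma RTheta_expand:
  "RTheta T x y z w = inner (T y) z * inner (T x) w - inner (T x) z * inner (T y) w
     - 2 * inner (T x) y * inner (T z) w"
  unfolding RTheta_def by (simp add: inner_diff_left)

lemma alg_curv_tensor_RTheta:
  assumes "hermitian_acs T"
  shows "alg_curv_tensor (RTheta T)"
proof -
  note lin = hermitian_acsD(1)[OF assms] and skew = hermitian_acsD(4)[OF assms]
  have "linear (\<lambda>x. RTheta T x y z w)" "linear (\<lambda>y. RTheta T x y z w)"
    "linear (\<lambda>z. RTheta T x y z w)" "linear (\<lambda>w. RTheta T x y z w)" for x y z w
    by (rule linearI; simp add: RTheta_expand linear_add[OF lin] linear_scale[OF lin]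
        algebra_simps)+
  moreover have "RTheta T x y z w = RTheta T z w x y" for x y z w
    using skew[of w x] skew[of z y] skew[of z x] skew[of w y] skew[of z w]
    unfolding RTheta_expand by algebra
  moreover have "RTheta T x y z w = - RTheta T y x z w" for x y z w
    using skew[of y x] unfolding RTheta_expand by algebra
  moreover have "RTheta T x y z w + RTheta T y z x w + RTheta T z x y w = 0" for x y z w
    using skew[of z x] skew[of y x] skew[of z y] unfolding RTheta_expand by algebra
  ultimately show ?thesis unfolding alg_curv_tensor_def by blast
qed

lemma jacobi_op_RTheta:
  assumes "hermitian_acs T"
  shows "jacobi_op (RTheta T) x z = (3 * inner z (T x)) *\<^sub>R T x"
proof -
  interpret curvature_tensor "RTheta T"
    by (rule curvature_tensor.intro[OF alg_curv_tensor_RTheta[OF assms]])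
  show ?thesis
    by (rule vector_eq_innerI)
      (simp add: RTheta_expand hermitian_acsD(5)[OF assms] hermitian_acsD(3)[OF assms, of z x])
qed

lemma jacobi_tsankov_RTheta:
  assumes "hermitian_acs T"
  shows "jacobi_tsankov (RTheta T)"
  unfolding jacobi_tsankov_def
proof (intro allI impI ext)
  fix x y z :: 'a
  assume "inner x y = 0"
  hence "inner (T x) (T y) = 0"
    by (metis assms hermitian_acsD(2,3) inner_minus_right neg_equal_zero)
  thus "(jacobi_op (RTheta T) x \<circ> jacobi_op (RTheta T) y) z = (jacobi_op (RTheta T) y \<circ> jacobi_op (RTheta T) x) z"
    by (simp add: jacobi_op_RTheta[OF assms] linear_scale[OF hermitian_acsD(1)[OF assms]] inner_commute)
qed

section \<open>Jacobi-Tsankov tensors\<close>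

locale jacobi_tsankov_tensor = curvature_tensor +
  assumes jt: "jacobi_tsankov R"
begin

lemma J_commute: "inner x y = 0 \<Longrightarrow> J x (J y z) = J y (J x z)"
  using jt unfolding jacobi_tsankov_def by (metis comp_apply)

lemma J_commute_Jpol:
  assumes "inner x y = 0" "inner x u = 0"
  shows "J x (Jpol y u z) = Jpol y u (J x z)"
proof -
  have e: "Jpol y u w = J (y+u) w - J y w - J u w" for w using J_add_left[of y u w] by simp
  have xyu: "inner x (y+u) = 0" using assms by (simp add: inner_add_right)
  show ?thesis unfolding e J_lin_simps
    using J_commute[OF xyu] J_commute[OF assms(1)] J_commute[OF assms(2)] by simp
qed

lemma J_eigvec_distinct:
  assumes xv: "inner x v = 0" and xw: "inner x w = 0" and ev: "J x v = l *\<^sub>R v"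
    and ew: "J x w = m *\<^sub>R w" and lm: "l \<noteq> m"
  shows "J v w = 0"
proof -
  have "J x (Jpol v w v) = Jpol v w (J x v)" by (rule J_commute_Jpol[OF xv xw])
  also have "\<dots> = l *\<^sub>R Jpol v w v" using ev linear_scale[OF Jpol_linear] by simp
  finally have "J x (J v w) = l *\<^sub>R J v w" using Jpol_first[of v w] J_lin_simps by simp
  moreover have "J x (J v w) = m *\<^sub>R J v w" using J_commute[OF xv] ew J_lin_simps by simp
  ultimately have "l *\<^sub>R J v w = m *\<^sub>R J v w" by metis
  thus ?thesis using lm scaleR_cancel_right by metis
qed

lemma J_eigvec_swap:
  assumes xv: "inner x v = 0" and ev: "J x v = l *\<^sub>R v" and l: "l \<noteq> 0"
  shows "inner x x *\<^sub>R J v x = (l * inner v v) *\<^sub>R x"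
proof -
  have perp: "inner (J v x) y = 0" if xy: "inner x y = 0" for y
  proof -
    have "J x (Jpol v y x) = Jpol v y (J x x)" by (rule J_commute_Jpol[OF xv xy])
    hence "J x (Jpol v y x) = 0" by (simp add: linear_0[OF Jpol_linear])
    hence "inner (J x (Jpol v y x)) v = 0" by simp
    hence "inner (Jpol v y x) (J x v) = 0" by (simp only: J_selfadjoint)
    hence "l * inner (Jpol v y x) v = 0" using ev by simp
    hence "R x v y v = 0" using l by simp
    thus ?thesis by (simp add: R_antisym'[of x v v y])
  qed
  show ?thesis
  proof (cases "x = 0")
    case True thus ?thesis by simp
  next
    case False
    define c where "c = inner (J v x) x / inner x x"
    define r where "r = J v x - c *\<^sub>R x"
    have xx: "inner x x \<noteq> 0" using False by simp
    have "inner x r = 0" unfolding r_def c_def using xx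
      by (simp add: inner_diff_right inner_commute)
    hence "inner (J v x) r = 0" using perp by simp
    moreover have "inner r r = inner (J v x) r - c * inner x r" unfolding r_def
      by (simp add: inner_diff_left)
    ultimately have "inner r r = 0" using \<open>inner x r = 0\<close> by simp
    hence "J v x = c *\<^sub>R x" unfolding r_def by simp
    moreover have "inner (J v x) x = l * inner v v"
    proof -
      have "inner (J v x) x = R x v v x" by simp
      also have "\<dots> = R v x x v" by (rule R_pair_sym)
      also have "\<dots> = inner (J x v) v" by simp
      finally show ?thesis using ev by simp
    qed
    ultimately show ?thesis unfolding c_def using xx by simp
  qed
qed

lemma J_eigvec_swap_unit:
  assumes "inner x x = 1" "inner x v = 0" "J x v = l *\<^sub>R v" "l \<noteq> 0"
  shows "J v x = (l * inner v v) *\<^sub>R x"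
  using J_eigvec_swap[OF assms(2-4)] assms(1) by simp

lemma J_eigvec_swap_eq:
  assumes "inner x v = 0" "J x v = l *\<^sub>R v" "l \<noteq> 0"
  shows "J v x = (l * inner v v / inner x x) *\<^sub>R x"
proof (cases "x = 0")
  case False
  thus ?thesis using J_eigvec_swap[OF assms] by (intro scaleR_eq_imp_eq_divide) auto
qed (simp add: J_lin_simps)

lemma J_eigvec_orthogonal: "J x w = m *\<^sub>R w \<Longrightarrow> m \<noteq> 0 \<Longrightarrow> inner x w = 0"
  using inner_J_self(1)[of x w] by (simp add: inner_commute)

lemma inner_J_eigvec:
  assumes "J x e = l *\<^sub>R e"
  shows "inner (J x u) e = l * inner u e"
  by (simp only: J_selfadjoint assms inner_scaleR_right)

lemma J_eigvecs_orthogonal: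
  assumes "J x v = l *\<^sub>R v" "J x w = m *\<^sub>R w" "l \<noteq> m"
  shows "inner v w = 0"
  using inner_J_eigvec[of x w m v] assms by (simp add: J_selfadjoint)

lemma subspace_J_eigenspace: "subspace {z. J x z = l *\<^sub>R z}"
  unfolding subspace_def by (simp add: J_lin_simps scaleR_add_right)

text \<open>If \<open>J x v = l v\<close> and \<open>J x w = m w\<close> with \<open>l \<noteq> m\<close>, then \<open>J v w = 0\<close> and \<open>x\<close> is an
  eigenvector of \<open>J v\<close> with nonzero eigenvalue; the same argument with the roles of \<open>x\<close> and
  \<open>v\<close> exchanged then kills \<open>J x w\<close>.\<close>
lemma J_nonzero_eigenvalues_eq:
  assumes v: "J x v = l *\<^sub>R v" "v \<noteq> 0" "l \<noteq> 0" and w: "J x w = m *\<^sub>R w" "w \<noteq> 0" "m \<noteq> 0"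
  shows "l = m"
proof (rule ccontr)
  assume "l \<noteq> m"
  have xv: "inner x v = 0" and xw: "inner x w = 0"
    using J_eigvec_orthogonal v w by auto
  have vw: "inner v w = 0" by (rule J_eigvecs_orthogonal[OF v(1) w(1) \<open>l \<noteq> m\<close>])
  have Jvw: "J v w = 0" by (rule J_eigvec_distinct[OF xv xw v(1) w(1) \<open>l \<noteq> m\<close>])
  have "x \<noteq> 0" using v by auto
  define c where "c = l * inner v v / inner x x"
  have c0: "c \<noteq> 0" unfolding c_def using v \<open>x \<noteq> 0\<close> by simp
  have Jvx: "J v x = c *\<^sub>R x" unfolding c_def by (rule J_eigvec_swap_eq[OF xv v(1,3)])
  have "J x w = 0"
    by (rule J_eigvec_distinct[OF _ vw Jvx, of 0]) (use xv Jvw c0 in \<open>auto simp: inner_commute\<close>)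
  thus False using w by simp
qed

text \<open>A nonzero \<open>J x\<close> has a single nonzero eigenvalue: it is \<open>l\<close> times an orthogonal projection.\<close>
lemma J_square_eq_eigenvalue:
  assumes l: "l \<noteq> 0" and v: "J x v = l *\<^sub>R v" "v \<noteq> 0"
  shows "J x (J x z) = l *\<^sub>R J x z"
proof -
  define E where "E = {z. J x z = l *\<^sub>R z}"
  define S where "S = {u. \<forall>e\<in>E. inner u e = 0}"
  have spanE: "span E = E" unfolding E_def by (simp add: span_eq_iff subspace_J_eigenspace)
  obtain y z' where "y \<in> span E" and z': "\<And>w. w \<in> span E \<Longrightarrow> orthogonal z' w" and zz: "z = y + z'"
    using orthogonal_subspace_decomp_exists[of E z] by blast
  hence y: "y \<in> E" using spanE by simp
  have "z' \<in> S" using z' spanE unfolding S_def orthogonal_def by simp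
  have "J x z' = 0"
  proof (rule ccontr)
    assume "J x z' \<noteq> 0"
    have "subspace S" unfolding S_def subspace_def by (simp add: inner_add_left)
    moreover have "J x u \<in> S" if "u \<in> S" for u
    proof -
      have "inner (J x u) e = 0" if "e \<in> E" for e
        using inner_J_eigvec[of x e l u] \<open>u \<in> S\<close> that unfolding S_def E_def by (simp del: inner_J)
      thus ?thesis unfolding S_def by blast
    qed
    ultimately obtain w m where "w \<in> S" "w \<noteq> 0" "m \<noteq> 0" "J x w = m *\<^sub>R w"
      using selfadjoint_nonzero_eigenvector[OF J_linear J_selfadjoint _ _ \<open>z' \<in> S\<close> \<open>J x z' \<noteq> 0\<close>]
      by blast
    moreover from this have "w \<in> E"
      using J_nonzero_eigenvalues_eq[OF v l] unfolding E_def by blast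
    ultimately show False unfolding S_def by auto
  qed
  thus ?thesis using y zz unfolding E_def by (simp add: J_lin_simps)
qed

lemma J_square_eq_scale:
  assumes "J x z0 \<noteq> 0"
  obtains l where "l \<noteq> 0" "\<And>z. J x (J x z) = l *\<^sub>R J x z"
  using selfadjoint_nonzero_eigenvector[OF J_linear J_selfadjoint subspace_UNIV _ _ assms]
    J_square_eq_eigenvalue by blast

lemma J_eigvec_swap_eigenspace:
  assumes xv: "inner x v = 0" and xe: "inner x e = 0" and ve: "inner v e = 0"
    and ev: "J x v = l *\<^sub>R v" and ee: "J x e = l *\<^sub>R e" and l: "l \<noteq> 0" and "v \<noteq> 0" "x \<noteq> 0"
  shows "J v e = (l * inner v v / inner x x) *\<^sub>R e"
proof -
  define c where "c = l * inner v v / inner x x"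
  have c0: "c \<noteq> 0" unfolding c_def using l \<open>v \<noteq> 0\<close> \<open>x \<noteq> 0\<close> by simp
  have Jvx: "J v x = c *\<^sub>R x" unfolding c_def by (rule J_eigvec_swap_eq[OF xv ev l])
  have sq: "J v (J v z) = c *\<^sub>R J v z" for z
    by (rule J_square_eq_eigenvalue[OF c0 Jvx \<open>x \<noteq> 0\<close>])
  define b where "b = e - (1/c) *\<^sub>R J v e"
  have Jvb: "J v b = 0" unfolding b_def using sq[of e] c0 by (simp add: J_lin_simps)
  have vb: "inner v b = 0" unfolding b_def using ve by (simp add: inner_diff_right inner_commute)
  have "J x b = 0"
    by (rule J_eigvec_distinct[OF _ vb Jvx, of 0]) (use xv Jvb c0 in \<open>auto simp: inner_commute\<close>)
  moreover have "J x b = l *\<^sub>R b"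
    unfolding b_def using ee J_commute[OF xv, of e] by (simp add: J_lin_simps scaleR_diff_right)
  ultimately have "b = 0" using l by simp
  hence "c *\<^sub>R e = c *\<^sub>R ((1/c) *\<^sub>R J v e)" unfolding b_def by simp
  thus ?thesis using c0 unfolding c_def by simp
qed

subsection \<open>A multiple nonzero eigenvalue: constant curvature\<close>

lemma J_kernel_swap:
  assumes Jxf: "J x f = 0" and xf: "inner x f = 0"
    and v: "J x v = l *\<^sub>R v" "v \<noteq> 0" "l \<noteq> 0"
  shows "J f x = 0"
proof -
  have xv: "inner x v = 0" using J_eigvec_orthogonal v by blast
  have vf: "inner v f = 0" using J_eigvecs_orthogonal[of x v l f 0] v Jxf by simp
  have "x \<noteq> 0" using v by auto
  define c where "c = l * inner v v / inner x x"
  have "c \<noteq> 0" unfolding c_def using v \<open>x \<noteq> 0\<close> by simp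
  have Jvx: "J v x = c *\<^sub>R x" unfolding c_def by (rule J_eigvec_swap_eq[OF xv v(1,3)])
  have "J x (J f x) = 0" using J_commute[OF xf, of x] by (simp add: J_lin_simps)
  moreover have "inner x (J f x) = 0"
    using inner_J_swap[of f x] Jxf by (simp add: inner_commute)
  ultimately have "J v (J f x) = 0"
    using J_eigvec_distinct[OF _ _ v(1), of "J f x" 0] xv v(3) by simp
  moreover have "J v (J f x) = c *\<^sub>R J f x"
    using J_commute[OF vf, of x] Jvx by (simp add: J_lin_simps)
  ultimately show ?thesis using \<open>c \<noteq> 0\<close> by simp
qed

lemma orthogonal_vector_in_subspace:
  assumes E: "subspace E" and v: "v1 \<in> E" "v2 \<in> E" "v1 \<noteq> 0" "v2 \<noteq> 0" "inner v1 v2 = 0"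
    and "e \<in> E"
  obtains v where "v \<in> E" "v \<noteq> 0" "inner v e = 0"
proof (cases "inner e v2 *\<^sub>R v1 - inner e v1 *\<^sub>R v2 = 0")
  case True
  hence "inner (inner e v2 *\<^sub>R v1 - inner e v1 *\<^sub>R v2) v2 = 0" by simp
  hence "inner e v1 * inner v2 v2 = 0" using v(5) by (simp add: inner_diff_left)
  hence "inner v1 e = 0" using v(4) by (simp add: inner_commute)
  thus ?thesis using that v by blast
next
  case False
  moreover have "inner e v2 *\<^sub>R v1 - inner e v1 *\<^sub>R v2 \<in> E"
    using v E by (simp add: subspace_diff subspace_scale)
  moreover have "inner (inner e v2 *\<^sub>R v1 - inner e v1 *\<^sub>R v2) e = 0"
    by (simp add: inner_diff_left inner_commute[of v1 e] inner_commute[of v2 e])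
  ultimately show ?thesis using that by blast
qed

lemma J_add_kernel_preserves_eigenspace:
  assumes l: "l \<noteq> 0" and Jxf: "J x f = 0" and xf: "inner x f = 0" and "x \<noteq> 0"
    and e: "J x e = l *\<^sub>R e" and v: "J x v = l *\<^sub>R v" "v \<noteq> 0" and ve: "inner v e = 0"
  shows "J x (J (x + f) e) = l *\<^sub>R J (x + f) e"
proof -
  define c where "c = l * inner v v / inner x x"
  have "c \<noteq> 0" unfolding c_def using l v \<open>x \<noteq> 0\<close> by simp
  have xv: "inner x v = 0" and xe: "inner x e = 0" using J_eigvec_orthogonal l e v by blast+
  have fv: "inner f v = 0" using J_eigvecs_orthogonal[of x f 0 v l] Jxf v l by simp
  have Jvx: "J v x = c *\<^sub>R x" unfolding c_def by (rule J_eigvec_swap_eq[OF xv v(1) l])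
  have Jve: "J v e = c *\<^sub>R e" unfolding c_def
    by (rule J_eigvec_swap_eigenspace[OF xv xe ve v(1) e l v(2) \<open>x \<noteq> 0\<close>])
  define w where "w = J (x + f) e"
  have "inner v (x + f) = 0" using xv fv by (simp add: inner_add_right inner_commute)
  hence Jvw: "J v w = c *\<^sub>R w" unfolding w_def using J_commute[of v "x + f" e] Jve
    by (simp add: J_lin_simps)
  have "J (x + f) x = 0"
    using Jxf J_kernel_swap[OF Jxf xf v(1,2) l]
      by (simp add: J_add_left Jpol_commute[of x f] Jpol_first)
  hence wx: "inner w x = 0" unfolding w_def by (metis J_selfadjoint inner_zero_right)
  define k where "k = w - (1/l) *\<^sub>R J x w"
  have "J x k = 0" unfolding k_def using J_square_eq_eigenvalue[OF l v(1,2)] l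
    by (simp add: J_lin_simps)
  moreover have "inner x k = 0" unfolding k_def using wx
    by (simp add: inner_diff_right inner_commute)
  ultimately have "J v k = 0" using J_eigvec_distinct[OF xv _ v(1), of k 0] l by simp
  moreover have "J v k = c *\<^sub>R k"
    unfolding k_def using Jvw J_commute[of v x w] xv
      by (simp add: inner_commute J_lin_simps scaleR_diff_right)
  ultimately have "k = 0" using \<open>c \<noteq> 0\<close> by simp
  hence "l *\<^sub>R ((1/l) *\<^sub>R J x w) = l *\<^sub>R w" unfolding k_def by simp
  thus ?thesis using l unfolding w_def by simp
qed

text \<open>If the eigenvalue \<open>l\<close> of \<open>J x\<close> has multiplicity at least two, the kernel of \<open>J x\<close> is
  spanned by \<open>x\<close>: for a kernel vector \<open>f \<perp> x\<close>, \<open>J (x + f)\<close> has an eigenvector in the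
  \<open>l\<close>-eigenspace, and the swap identity for it contradicts \<open>f \<noteq> 0\<close>.\<close>
lemma J_kernel_trivial_if_multiple_eigenvalue:
  assumes l: "l \<noteq> 0" and v1: "J x v1 = l *\<^sub>R v1" "v1 \<noteq> 0" and v2: "J x v2 = l *\<^sub>R v2" "v2 \<noteq> 0"
    and v12: "inner v1 v2 = 0" and Jxf: "J x f = 0" and xf: "inner x f = 0"
  shows "f = 0"
proof (rule ccontr)
  assume "f \<noteq> 0"
  define E where "E = {z. J x z = l *\<^sub>R z}"
  have subE: "subspace E" unfolding E_def by (rule subspace_J_eigenspace)
  have "x \<noteq> 0" using v1 l by auto
  define y where "y = x + f"
  have fE: "inner f e = 0" if "e \<in> E" for e
    using J_eigvecs_orthogonal[of x f 0 e l] that Jxf l unfolding E_def by simp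
  have yE: "inner y e = 0" if "e \<in> E" for e
    using J_eigvec_orthogonal[of x e l] fE[OF that] that l unfolding E_def y_def
      by (simp add: inner_add_left)
  have J_e_y: "J e y = (l * inner e e / inner x x) *\<^sub>R x" if "e \<in> E" for e
  proof -
    have "inner x e = 0" using J_eigvec_orthogonal[of x e l] that l unfolding E_def by simp
    moreover have "J e f = 0" using J_eigvec_distinct[of x e f l 0] that xf Jxf l \<open>inner x e = 0\<close>
      unfolding E_def by simp
    ultimately show ?thesis
      using J_eigvec_swap_eq[of x e l] that l unfolding E_def y_def by (simp add: J_lin_simps)
  qed
  have invE: "J y e \<in> E" if eE: "e \<in> E" for e
  proof -
    obtain v where "v \<in> E" "v \<noteq> 0" "inner v e = 0"
      using orthogonal_vector_in_subspace[OF subE _ _ v1(2) v2(2) v12 eE] v1 v2 unfolding E_def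
        by blast
    thus ?thesis using J_add_kernel_preserves_eigenspace[OF l Jxf xf \<open>x \<noteq> 0\<close>] eE
      unfolding E_def y_def by blast
  qed
  have "inner (J y v1) v1 = inner (J v1 y) y" by (rule inner_J_swap)
  also have "\<dots> = l * inner v1 v1 / inner x x * inner x y"
    using J_e_y[of v1] v1 unfolding E_def by simp
  also have "inner x y = inner x x" unfolding y_def using xf by (simp add: inner_add_right)
  finally have "inner (J y v1) v1 \<noteq> 0" using v1 l \<open>x \<noteq> 0\<close> by simp
  hence "J y v1 \<noteq> 0" by (metis inner_zero_left)
  then obtain e m where "e \<in> E" "e \<noteq> 0" "m \<noteq> 0" and Jye: "J y e = m *\<^sub>R e"
    using selfadjoint_nonzero_eigenvector[OF J_linear J_selfadjoint subE invE, of v1] v1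
    unfolding E_def by blast
  have "inner y y *\<^sub>R J e y = (m * inner e e) *\<^sub>R y"
    by (rule J_eigvec_swap[OF yE[OF \<open>e \<in> E\<close>] Jye \<open>m \<noteq> 0\<close>])
  hence "inner (inner y y *\<^sub>R J e y) f = m * inner e e * inner f f"
    unfolding y_def using xf by (simp add: inner_add_left inner_commute[of f x])
  moreover have "inner (inner y y *\<^sub>R J e y) f = 0" using J_e_y[OF \<open>e \<in> E\<close>] xf by simp
  ultimately show False using \<open>m \<noteq> 0\<close> \<open>e \<noteq> 0\<close> \<open>f \<noteq> 0\<close> by simp
qed

definition const_curv_at :: "'a \<Rightarrow> real \<Rightarrow> bool" where
  "const_curv_at x k \<longleftrightarrow> (\<forall>z. J x z = k *\<^sub>R (inner x x *\<^sub>R z - inner z x *\<^sub>R x))"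

lemma const_curv_at_if_multiple_eigenvalue:
  assumes l: "l \<noteq> 0" and v1: "J x v1 = l *\<^sub>R v1" "v1 \<noteq> 0" and v2: "J x v2 = l *\<^sub>R v2" "v2 \<noteq> 0"
    and v12: "inner v1 v2 = 0"
  shows "const_curv_at x (l / inner x x)"
  unfolding const_curv_at_def
proof
  fix z
  have "x \<noteq> 0" using v1 l by auto
  define f where "f = z - (1/l) *\<^sub>R J x z - (inner z x / inner x x) *\<^sub>R x"
  have "J x f = 0" unfolding f_def using J_square_eq_eigenvalue[OF l v1] l
    by (simp add: J_lin_simps)
  moreover have "inner x f = 0" unfolding f_def using \<open>x \<noteq> 0\<close>
    by (simp add: inner_diff_right inner_commute)
  ultimately have "f = 0" by (rule J_kernel_trivial_if_multiple_eigenvalue[OF l v1 v2 v12])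
  hence "(1/l) *\<^sub>R J x z = z - (inner z x / inner x x) *\<^sub>R x"
    unfolding f_def by (simp add: algebra_simps)
  hence "l *\<^sub>R ((1/l) *\<^sub>R J x z) = l *\<^sub>R (z - (inner z x / inner x x) *\<^sub>R x)" by simp
  thus "J x z = (l / inner x x) *\<^sub>R (inner x x *\<^sub>R z - inner z x *\<^sub>R x)"
    using l \<open>x \<noteq> 0\<close> by (simp add: scaleR_diff_right)
qed

lemma const_curv_at_orthogonal:
  assumes S: "const_curv_at x k" and k: "k \<noteq> 0" and "x \<noteq> 0" and xy: "inner x y = 0"
  shows "const_curv_at y k"
  unfolding const_curv_at_def
proof
  fix z
  define l where "l = k * inner x x"
  have l0: "l \<noteq> 0" unfolding l_def using k \<open>x \<noteq> 0\<close> by simp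
  have Jx: "J x w = l *\<^sub>R w" if "inner w x = 0" for w
    using S that unfolding const_curv_at_def l_def by simp
  have Jxy: "J x y = l *\<^sub>R y" using Jx xy by (simp add: inner_commute)
  have Jyx: "J y x = (k * inner y y) *\<^sub>R x"
    using J_eigvec_swap_eq[OF xy Jxy l0] \<open>x \<noteq> 0\<close> unfolding l_def by simp
  show "J y z = k *\<^sub>R (inner y y *\<^sub>R z - inner z y *\<^sub>R y)"
  proof (cases "y = 0")
    case False
    define a where "a = inner z x / inner x x"
    define b where "b = inner z y / inner y y"
    define w where "w = z - a *\<^sub>R x - b *\<^sub>R y"
    have wx: "inner w x = 0" and wy: "inner w y = 0"
      unfolding w_def a_def b_def using \<open>x \<noteq> 0\<close> False xy
      by (simp_all add: inner_diff_left inner_commute[of y x])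
    have "J y w = (k * inner y y) *\<^sub>R w"
      using J_eigvec_swap_eigenspace[OF xy _ _ Jxy Jx[OF wx] l0 False \<open>x \<noteq> 0\<close>] wx wy \<open>x \<noteq> 0\<close>
      unfolding l_def by (simp add: inner_commute)
    moreover have "z = a *\<^sub>R x + b *\<^sub>R y + w" unfolding w_def by simp
    ultimately have "J y z = (k * inner y y) *\<^sub>R (z - b *\<^sub>R y)"
      using Jyx unfolding w_def by (simp add: J_lin_simps algebra_simps)
    thus ?thesis unfolding b_def using False by (simp add: scaleR_diff_right)
  qed (simp add: J_lin_simps)
qed

lemma const_curv_at_everywhere:
  assumes dim: "DIM('a) \<ge> 3" and S: "const_curv_at x k" and k: "k \<noteq> 0" and x0: "x \<noteq> 0"
  shows "const_curv_at y k"
proof -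
  have "dim {x, y} \<le> card {x, y}" by (rule dim_le_card) (auto intro: span_base)
  also have "\<dots> \<le> 2" by (simp add: card_insert_if)
  finally have "dim {x, y} < DIM('a)" using dim by simp
  then obtain u where u0: "u \<noteq> 0" and uo: "\<And>w. w \<in> span {x, y} \<Longrightarrow> orthogonal u w"
    using orthogonal_to_subspace_exists[of "{x,y}"] by blast
  have ux: "inner x u = 0" using uo[of x] by (simp add: span_base orthogonal_def inner_commute)
  have uy: "inner u y = 0" using uo[of y] by (simp add: span_base orthogonal_def)
  have "const_curv_at u k" by (rule const_curv_at_orthogonal[OF S k x0 ux])
  thus ?thesis by (rule const_curv_at_orthogonal[OF _ k u0 uy])
qed

lemma R_eq_R0_if_const_curv_at:
  assumes dim: "DIM('a) \<ge> 3" and S: "const_curv_at x k" and k: "k \<noteq> 0" and x0: "x \<noteq> 0"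
  shows "R = (\<lambda>x y z w. k * R0 x y z w)"
proof (rule alg_curv_tensor_eqI[OF alg_curv alg_curv_tensor_scale[OF alg_curv_tensor_R0]])
  fix z y w
  have "J y z = k *\<^sub>R jacobi_op R0 y z"
    using const_curv_at_everywhere[OF dim S k x0] unfolding const_curv_at_def
      by (simp add: jacobi_op_R0)
  thus "R z y y w = k * R0 z y y w"
    using inner_J[of y z w] by (simp add: R0_def jacobi_op_R0)
qed

subsection \<open>Rank-one Jacobi operators\<close>

lemma rank_one_J_eigvec:
  assumes J: "\<And>z. J y z = (m * inner z e) *\<^sub>R e" and ee: "inner e e = 1"
    and ea: "J y a = k *\<^sub>R a" and a0: "a \<noteq> 0" and k0: "k \<noteq> 0"
  shows "J y z = (k / inner a a * inner z a) *\<^sub>R a"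
proof -
  define t where "t = inner a e"
  have A: "(m * t) *\<^sub>R e = k *\<^sub>R a" using J[of a] ea unfolding t_def by simp
  have aa: "inner a a \<noteq> 0" using a0 by simp
  have mt: "m * t \<noteq> 0" using A k0 a0 by auto
  have eq: "e = (k / (m * t)) *\<^sub>R a" by (rule scaleR_eq_imp_eq_divide[OF mt A])
  have "inner ((m * t) *\<^sub>R e) a = inner (k *\<^sub>R a) a" using A by simp
  hence mtt: "m * t * t = k * inner a a" unfolding t_def by (simp add: inner_commute)
  have "J y z = (m * inner z e) *\<^sub>R e" by (rule J)
  also have "\<dots> = (m * (k / (m * t)) * (k / (m * t)) * inner z a) *\<^sub>R a"
    unfolding eq by (simp add: algebra_simps)
  also have "m * (k / (m * t)) * (k / (m * t)) = k / inner a a"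
    using mt aa mtt k0 by (simp add: field_simps power2_eq_square)
  finally show ?thesis .
qed

lemma rank_one_commute:
  assumes J1: "\<And>z. J y1 z = (m1 * inner z e1) *\<^sub>R e1" and J2: "\<And>z. J y2 z = (m2 * inner z e2) *\<^sub>R e2"
    and e1: "inner e1 e1 = 1" and e2: "inner e2 e2 = 1" and m1: "m1 \<noteq> 0" and m2: "m2 \<noteq> 0"
    and y12: "inner y1 y2 = 0"
  shows "inner e1 e2 = 0 \<or> (\<exists>t. t * t = 1 \<and> e2 = t *\<^sub>R e1)"
proof (cases "inner e1 e2 = 0")
  case False
  define t where "t = inner e1 e2"
  have "J y1 (J y2 e1) = J y2 (J y1 e1)" by (rule J_commute[OF y12])
  hence "(m1 * m2 * t * t) *\<^sub>R e1 = (m1 * m2 * t) *\<^sub>R e2"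
    unfolding t_def using J1 J2 e1 by (simp add: inner_commute algebra_simps)
  hence "(1/(m1*m2)) *\<^sub>R ((m1 * m2 * t * t) *\<^sub>R e1) = (1/(m1*m2)) *\<^sub>R ((m1 * m2 * t) *\<^sub>R e2)"
    by simp
  hence "(t * t) *\<^sub>R e1 = t *\<^sub>R e2" using m1 m2 by simp
  hence e2t: "e2 = t *\<^sub>R e1" using False unfolding t_def
    by (metis scaleR_scaleR scaleR_cancel_left mult.commute)
  have "inner e2 e2 = t * t" using e1 unfolding e2t by simp
  thus ?thesis using e2 e2t by auto
qed simp

lemma rank_one_sum_orthogonal:
  assumes J1: "\<And>z. J y1 z = (m1 * inner z e1) *\<^sub>R e1" and J2: "\<And>z. J y2 z = (m2 * inner z e2) *\<^sub>R e2"
    and e1: "inner e1 e1 = 1" and e2: "inner e2 e2 = 1" and m1: "m1 \<noteq> 0" and m2: "m2 \<noteq> 0"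
    and y12: "inner y1 y2 = 0"
    and sum: "\<And>z. J y1 z + J y2 z = (a * inner z q) *\<^sub>R q + (b * inner z g) *\<^sub>R g"
    and qq: "inner q q = 1" and gg: "inner g g = 1" and qg: "inner q g = 0" and "a \<noteq> 0" "b \<noteq> 0"
  shows "inner e1 e2 = 0"
  using rank_one_commute[OF J1 J2 e1 e2 m1 m2 y12]
proof
  assume "\<exists>t. t * t = 1 \<and> e2 = t *\<^sub>R e1"
  then obtain t where tt: "t * t = 1" and e2t: "e2 = t *\<^sub>R e1" by blast
  have S: "J y1 z + J y2 z = ((m1 + m2) * inner z e1) *\<^sub>R e1" for z
    using J1[of z] J2[of z] tt unfolding e2t by (simp add: algebra_simps)
  have A: "((m1 + m2) * inner q e1) *\<^sub>R e1 = a *\<^sub>R q"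
    using S[of q] sum[of q] qq qg by simp
  have "inner (((m1 + m2) * inner q e1) *\<^sub>R e1) q = a" using A qq by simp
  hence "(m1 + m2) * inner q e1 \<noteq> 0" using \<open>a \<noteq> 0\<close> by auto
  moreover have "inner (((m1 + m2) * inner q e1) *\<^sub>R e1) g = 0" using A qg by simp
  ultimately have "inner e1 g = 0" by simp
  moreover have "((m1 + m2) * inner g e1) *\<^sub>R e1 = b *\<^sub>R g"
    using S[of g] sum[of g] gg qg by (simp add: inner_commute)
  ultimately have "b *\<^sub>R g = 0" by (simp add: inner_commute)
  thus ?thesis using \<open>b \<noteq> 0\<close> gg by auto
qed

lemma rank_one_sum_parallel:
  assumes J1: "\<And>z. J y1 z = (m1 * inner z e1) *\<^sub>R e1" and J2: "\<And>z. J y2 z = (m2 * inner z e2) *\<^sub>R e2"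
    and e1: "inner e1 e1 = 1" and e2: "inner e2 e2 = 1" and m1: "m1 \<noteq> 0" and m2: "m2 \<noteq> 0"
    and y12: "inner y1 y2 = 0"
    and sum: "\<And>z. J y1 z + J y2 z = (a * inner z v) *\<^sub>R v" and vv: "inner v v = 1" and "a \<noteq> 0"
  obtains s where "e1 = s *\<^sub>R v"
  using rank_one_commute[OF J1 J2 e1 e2 m1 m2 y12]
proof
  assume "inner e1 e2 = 0"
  hence "m1 *\<^sub>R e1 = (a * inner e1 v) *\<^sub>R v" using sum[of e1] J1 J2 e1 by simp
  thus ?thesis using that scaleR_eq_imp_eq_divide[OF m1] by blast
next
  assume "\<exists>t. t * t = 1 \<and> e2 = t *\<^sub>R e1"
  then obtain t where tt: "t * t = 1" and e2t: "e2 = t *\<^sub>R e1" by blast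
  have "(m1 * inner v e1) *\<^sub>R e1 + (m2 * inner v e2) *\<^sub>R e2 = a *\<^sub>R v"
    using sum[of v] J1 J2 vv by simp
  hence A: "((m1 + m2 * (t * t)) * inner v e1) *\<^sub>R e1 = a *\<^sub>R v"
    unfolding e2t by (simp add: algebra_simps)
  moreover have "(m1 + m2 * (t * t)) * inner v e1 \<noteq> 0" using A \<open>a \<noteq> 0\<close> vv by auto
  ultimately show ?thesis using that scaleR_eq_imp_eq_divide by blast
qed

text \<open>Comparing the coefficients of \<open>J y\<^sub>1 + J y\<^sub>2\<close> in the orthonormal pairs \<open>e\<^sub>1, e\<^sub>2\<close> and
  \<open>q, g\<close> forces both coefficients to agree and \<open>e\<^sub>1\<close> to bisect \<open>q\<close> and \<open>g\<close>.\<close>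
lemma rank_one_sum_coefficients:
  assumes J1: "\<And>z. J y1 z = (m1 * inner z e1) *\<^sub>R e1" and J2: "\<And>z. J y2 z = (m2 * inner z e2) *\<^sub>R e2"
    and e1: "inner e1 e1 = 1" and e12: "inner e1 e2 = 0"
    and sum: "\<And>z. J y1 z + J y2 z = (2 * l * inner z q) *\<^sub>R q + (2 * lf * inner z g) *\<^sub>R g"
    and qq: "inner q q = 1" and gg: "inner g g = 1" and qg: "inner q g = 0"
    and K1q: "inner (J y1 q) q = l" and K1g: "inner (J y1 g) g = lf" and l: "l \<noteq> 0" and lf: "lf \<noteq> 0"
  shows "lf = l \<and> m1 = 2 * l \<and> e1 = inner e1 q *\<^sub>R q + inner e1 g *\<^sub>R g \<and>
    2 * (inner e1 q * inner e1 q) = 1 \<and> 2 * (inner e1 g * inner e1 g) = 1"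
proof -
  define \<alpha> where "\<alpha> = inner e1 q"
  define \<gamma> where "\<gamma> = inner e1 g"
  have E: "m1 *\<^sub>R e1 = (2 * l * \<alpha>) *\<^sub>R q + (2 * lf * \<gamma>) *\<^sub>R g"
    using sum[of e1] J1[of e1] J2[of e1] e1 e12 unfolding \<alpha>_def \<gamma>_def by simp
  have a2: "m1 * \<alpha> * \<alpha> = l" using K1q J1[of q] unfolding \<alpha>_def by (simp add: inner_commute)
  have g2: "m1 * \<gamma> * \<gamma> = lf" using K1g J1[of g] unfolding \<gamma>_def by (simp add: inner_commute)
  have "m1 * \<alpha> = 2 * l * \<alpha>" using arg_cong[OF E, of "\<lambda>u. inner u q"] qq qg
    unfolding \<alpha>_def by (simp add: inner_add_left inner_commute[of g q])
  hence m1l: "m1 = 2 * l" using a2 l by auto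
  have "m1 * \<gamma> = 2 * lf * \<gamma>" using arg_cong[OF E, of "\<lambda>u. inner u g"] gg qg
    unfolding \<gamma>_def by (simp add: inner_add_left)
  hence "m1 = 2 * lf" using g2 lf by auto
  hence lfl: "lf = l" using m1l by simp
  have "(2 * l) *\<^sub>R e1 = (2 * l) *\<^sub>R (\<alpha> *\<^sub>R q + \<gamma> *\<^sub>R g)" using E m1l lfl
    by (simp add: scaleR_add_right)
  hence "e1 = \<alpha> *\<^sub>R q + \<gamma> *\<^sub>R g" using l by simp
  moreover have "2 * (\<alpha> * \<alpha>) = 1" "2 * (\<gamma> * \<gamma>) = 1" using a2 g2 m1l lfl l
    by (simp_all add: algebra_simps)
  ultimately show ?thesis using m1l lfl unfolding \<alpha>_def \<gamma>_def by blast
qed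

lemma Jpol_eq_if_rank_one:
  assumes J_sum: "\<And>z. J (p + f) z = (2 * l * inner z e) *\<^sub>R e" and e: "e = \<alpha> *\<^sub>R q + \<gamma> *\<^sub>R g"
    and \<alpha>: "2 * (\<alpha> * \<alpha>) = 1" and \<gamma>: "2 * (\<gamma> * \<gamma>) = 1"
    and Jp: "\<And>z. J p z = (l * inner z q) *\<^sub>R q" and Jf: "\<And>z. J f z = (l * inner z g) *\<^sub>R g"
  shows "Jpol p f z = ((2 * \<alpha> * \<gamma>) * l) *\<^sub>R (inner z q *\<^sub>R g + inner z g *\<^sub>R q)"
proof -
  have "Jpol p f z = J (p + f) z - J p z - J f z" unfolding J_add_left by simp
  also have "\<dots> = ((2 * \<alpha> * \<gamma>) * l) *\<^sub>R (inner z q *\<^sub>R g + inner z g *\<^sub>R q)"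
  proof (rule vector_eq_innerI)
    fix w
    show "inner (J (p + f) z - J p z - J f z) w
        = inner (((2 * \<alpha> * \<gamma>) * l) *\<^sub>R (inner z q *\<^sub>R g + inner z g *\<^sub>R q)) w"
      unfolding J_sum Jp Jf e
      by (simp add: inner_add_left inner_add_right inner_diff_left) (use \<alpha> \<gamma> in algebra)
  qed
  finally show ?thesis .
qed

end

subsection \<open>Simple nonzero eigenvalues: the complex model\<close>

locale jt_simple_eigenvalues = jacobi_tsankov_tensor +
  assumes simple_eigenvalues:
    "\<lbrakk>l \<noteq> 0; J x v1 = l *\<^sub>R v1; J x v2 = l *\<^sub>R v2; inner v1 v2 = 0\<rbrakk> \<Longrightarrow> v1 = 0 \<or> v2 = 0"
begin

lemma J_rank_one:
  assumes nz: "J y z0 \<noteq> 0"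
  shows "\<exists>m e. m \<noteq> 0 \<and> inner e e = 1 \<and> (\<forall>z. J y z = (m * inner z e) *\<^sub>R e)"
proof -
  obtain l where l: "l \<noteq> 0" and sq: "\<And>z. J y (J y z) = l *\<^sub>R J y z"
    using J_square_eq_scale[OF nz] by blast
  define e where "e = J y z0 /\<^sub>R norm (J y z0)"
  have ee: "inner e e = 1" unfolding e_def using nz
    by (simp add: inner_commute power2_norm_eq_inner[symmetric] power2_eq_square)
  have Je: "J y e = l *\<^sub>R e" unfolding e_def using sq[of z0] by (simp add: J_lin_simps)
  have "J y z = (l * inner z e) *\<^sub>R e" for z
  proof -
    define u where "u = (1/l) *\<^sub>R J y z"
    have Ju: "J y u = l *\<^sub>R u" unfolding u_def using sq[of z] l by (simp add: J_lin_simps)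
    define w where "w = u - inner u e *\<^sub>R e"
    have Jw: "J y w = l *\<^sub>R w" unfolding w_def using Ju Je
      by (simp add: J_lin_simps scaleR_diff_right)
    have "inner w e = 0" unfolding w_def using ee by (simp add: inner_diff_left)
    hence "w = 0" using simple_eigenvalues[OF l Jw Je] ee by auto
    hence "u = inner u e *\<^sub>R e" unfolding w_def by simp
    moreover have "J y z = l *\<^sub>R u" unfolding u_def using l by simp
    ultimately have "J y z = l *\<^sub>R (inner u e *\<^sub>R e)" by simp
    also have "inner u e = (1/l) * inner (J y z) e" unfolding u_def by simp
    also have "inner (J y z) e = l * inner z e" by (rule inner_J_eigvec[OF Je])
    finally show ?thesis using l by simp
  qed
  thus ?thesis using l ee by blast
qed

text \<open>Two rank-one pairs \<open>(p, q)\<close> and \<open>(f, g)\<close>: \<open>J (p \<pm> f)\<close> are commuting rank-one operators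
  whose sum has rank two, which pins down the polarization \<open>Jpol p f\<close> up to a sign.\<close>
lemma Jpol_rank_one_pairs:
  assumes pp: "inner p p = 1" and qq: "inner q q = 1" and ff: "inner f f = 1"
      and gg: "inner g g = 1"
    and pf: "inner p f = 0" and qg: "inner q g = 0"
    and Jp: "\<And>z. J p z = (l * inner z q) *\<^sub>R q" and Jq: "\<And>z. J q z = (l * inner z p) *\<^sub>R p"
    and Jf: "\<And>z. J f z = (lf * inner z g) *\<^sub>R g" and Jgp: "J g p = 0" and l: "l \<noteq> 0" and lf: "lf \<noteq> 0"
  shows "lf = l \<and> (\<exists>\<sigma>. \<sigma> * \<sigma> = 1 \<and> (\<forall>z. Jpol p f z = (\<sigma> * l) *\<^sub>R (inner z q *\<^sub>R g + inner z g *\<^sub>R q)))"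
proof -
  define y1 where "y1 = p + f"
  define y2 where "y2 = p - f"
  have fp: "inner f p = 0" using pf by (simp add: inner_commute)
  have y12: "inner y1 y2 = 0" unfolding y1_def y2_def using pp ff pf fp
    by (simp add: inner_add_left inner_diff_right)
  have Kq: "inner (J y q) q = l * inner y p * inner y p" for y
    using inner_J_swap[of y q] Jq[of y] by (simp add: inner_commute)
  have "inner y1 p = 1" "inner y2 p = 1"
    unfolding y1_def y2_def using pp fp by (simp_all add: inner_add_left inner_diff_left)
  hence K1q: "inner (J y1 q) q = l" and K2q: "inner (J y2 q) q = l" using Kq by simp_all
  have K1g: "inner (J y1 g) g = lf"
  proof -
    have "inner (J y1 g) g = inner (J g y1) y1" by (rule inner_J_swap)
    also have "J g y1 = J g f" unfolding y1_def using Jgp by (simp add: J_lin_simps)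
    also have "inner (J g f) y1 = inner f (J g p) + inner (J f g) g"
      unfolding y1_def by (simp only: inner_add_right J_selfadjoint[of g f p] inner_J_swap[of g f])
    finally show ?thesis using Jgp Jf[of g] gg by simp
  qed
  have "J y1 q \<noteq> 0" using K1q l by (metis inner_zero_left)
  then obtain m1 e1 where m1: "m1 \<noteq> 0" and e1: "inner e1 e1 = 1"
    and J1: "\<And>z. J y1 z = (m1 * inner z e1) *\<^sub>R e1"
    using J_rank_one by blast
  have "J y2 q \<noteq> 0" using K2q l by (metis inner_zero_left)
  then obtain m2 e2 where m2: "m2 \<noteq> 0" and e2: "inner e2 e2 = 1"
    and J2: "\<And>z. J y2 z = (m2 * inner z e2) *\<^sub>R e2"
    using J_rank_one by blast
  have sum: "J y1 z + J y2 z = (2 * l * inner z q) *\<^sub>R q + (2 * lf * inner z g) *\<^sub>R g" for z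
  proof -
    have "J y1 z + J y2 z = 2 *\<^sub>R J p z + 2 *\<^sub>R J f z"
      unfolding y1_def y2_def J_add_left J_diff_left by (simp add: scaleR_2)
    thus ?thesis using Jp[of z] Jf[of z] by (simp add: mult.assoc)
  qed
  have "inner e1 e2 = 0"
    by (rule rank_one_sum_orthogonal[OF J1 J2 e1 e2 m1 m2 y12 sum qq gg qg]) (use l lf in auto)
  hence coeff: "lf = l \<and> m1 = 2 * l \<and> e1 = inner e1 q *\<^sub>R q + inner e1 g *\<^sub>R g \<and>
      2 * (inner e1 q * inner e1 q) = 1 \<and> 2 * (inner e1 g * inner e1 g) = 1"
    by (rule rank_one_sum_coefficients[OF J1 J2 e1 _ sum qq gg qg K1q K1g l lf])
  define \<alpha> where "\<alpha> = inner e1 q"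
  define \<gamma> where "\<gamma> = inner e1 g"
  have "lf = l" and e1_eq: "e1 = \<alpha> *\<^sub>R q + \<gamma> *\<^sub>R g" and "m1 = 2 * l"
    and \<alpha>: "2 * (\<alpha> * \<alpha>) = 1" and \<gamma>: "2 * (\<gamma> * \<gamma>) = 1"
    using coeff unfolding \<alpha>_def \<gamma>_def by blast+
  have "Jpol p f z = ((2 * \<alpha> * \<gamma>) * l) *\<^sub>R (inner z q *\<^sub>R g + inner z g *\<^sub>R q)" for z
    by (rule Jpol_eq_if_rank_one[OF _ e1_eq \<alpha> \<gamma> Jp]) (use J1 Jf \<open>m1 = 2 * l\<close> \<open>lf = l\<close> in \<open>simp_all add: y1_def\<close>)
  moreover have "(2 * \<alpha> * \<gamma>) * (2 * \<alpha> * \<gamma>) = 1"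
    using \<alpha> \<gamma> by (metis (no_types, opaque_lifting) mult.assoc mult.commute mult.right_neutral)
  ultimately show ?thesis using \<open>lf = l\<close> by blast
qed

end

locale jt_rank_one_pair = jt_simple_eigenvalues +
  fixes x0 v0 :: 'a and l :: real
  assumes x0_unit: "inner x0 x0 = 1" and v0_unit: "inner v0 v0 = 1" and x0_v0: "inner x0 v0 = 0"
    and l_nonzero: "l \<noteq> 0" and J_x0: "\<And>z. J x0 z = (l * inner z v0) *\<^sub>R v0"
begin

lemma v0_x0: "inner v0 x0 = 0"
  using x0_v0 by (simp add: inner_commute)

lemma x0_nonzero: "x0 \<noteq> 0"
  using x0_unit by auto

lemma J_x0_v0: "J x0 v0 = l *\<^sub>R v0"
  using J_x0[of v0] v0_unit by simp

lemma J_v0: "J v0 z = (l * inner z x0) *\<^sub>R x0"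
proof -
  have Jv0x0: "J v0 x0 = l *\<^sub>R x0"
    using J_eigvec_swap_unit[OF x0_unit x0_v0 J_x0_v0 l_nonzero] v0_unit by simp
  hence "J v0 x0 \<noteq> 0" using l_nonzero x0_nonzero by simp
  then obtain m e where m: "m \<noteq> 0" and ee: "inner e e = 1"
      and J: "\<forall>z. J v0 z = (m * inner z e) *\<^sub>R e"
    using J_rank_one by blast
  show ?thesis using rank_one_J_eigvec[of v0 m e x0 l z] J ee Jv0x0 x0_nonzero l_nonzero x0_unit
    by simp
qed

lemma R_x0: "R u x0 x0 w = l * inner u v0 * inner v0 w"
  using inner_J[of x0 u w] J_x0[of u] by simp

lemma R_v0: "R u v0 v0 w = l * inner u x0 * inner x0 w"
  using inner_J[of v0 u w] J_v0[of u] by simp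

lemma R_x0_v0_x0: "R x0 v0 x0 w = - (l * inner v0 w)"
  using R_antisym[of x0 v0 x0 w] R_x0[of v0 w] v0_unit by simp

lemma R_v0_x0_v0: "R v0 x0 v0 w = - (l * inner x0 w)"
  using R_antisym[of v0 x0 v0 w] R_v0[of x0 w] x0_unit by simp

lemma J_pair_span:
  "J (a *\<^sub>R x0 + b *\<^sub>R v0) z = (l * inner z (a *\<^sub>R v0 - b *\<^sub>R x0)) *\<^sub>R (a *\<^sub>R v0 - b *\<^sub>R x0)"
proof (cases "a = 0 \<and> b = 0")
  case True thus ?thesis by (simp add: J_zero_left)
next
  case False
  define p where "p = a *\<^sub>R x0 + b *\<^sub>R v0"
  define q where "q = a *\<^sub>R v0 - b *\<^sub>R x0"
  have qq: "inner q q = a*a + b*b" unfolding q_def using x0_unit v0_unit x0_v0 v0_x0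
    by (simp add: inner_diff_left inner_diff_right)
  have ab: "a*a + b*b \<noteq> 0" using False by (simp add: add_nonneg_eq_0_iff)
  have q0: "q \<noteq> 0" using qq ab by auto
  have Jpq: "J p q = (l * (a*a + b*b)) *\<^sub>R q"
  proof (rule vector_eq_innerI)
    fix w
    show "inner (J p q) w = inner ((l * (a*a + b*b)) *\<^sub>R q) w"
      unfolding p_def q_def using x0_unit v0_unit x0_v0 v0_x0
      by (simp add: R_x0 R_v0 R_x0_v0_x0 R_v0_x0_v0 inner_diff_left inner_add_left algebra_simps)
  qed
  have k0: "l * (a*a + b*b) \<noteq> 0" using l_nonzero ab by simp
  have "J p \<noteq> (\<lambda>_. 0)" using Jpq k0 q0 by (metis scaleR_eq_0_iff)
  then obtain z0 where "J p z0 \<noteq> 0" by auto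
  then obtain m e where m: "m \<noteq> 0" and ee: "inner e e = 1" and J: "\<forall>z. J p z = (m * inner z e) *\<^sub>R e"
    using J_rank_one by blast
  have "J p z = (l * (a*a + b*b) / inner q q * inner z q) *\<^sub>R q"
    using rank_one_J_eigvec[of p m e q "l * (a*a+b*b)" z] J ee Jpq q0 k0 by blast
  moreover have "l * (a*a + b*b) / inner q q = l" using qq ab by simp
  ultimately have "J p z = (l * inner z q) *\<^sub>R q" by simp
  thus ?thesis unfolding p_def q_def .
qed

lemma J_pair_span':
  "J (a *\<^sub>R v0 - b *\<^sub>R x0) z = (l * inner z (a *\<^sub>R x0 + b *\<^sub>R v0)) *\<^sub>R (a *\<^sub>R x0 + b *\<^sub>R v0)"
proof -
  have "a *\<^sub>R v0 - b *\<^sub>R x0 = (-b) *\<^sub>R x0 + a *\<^sub>R v0" by simp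
  moreover have "a *\<^sub>R x0 - (-b) *\<^sub>R v0 = a *\<^sub>R x0 + b *\<^sub>R v0" by simp
  ultimately show ?thesis using J_pair_span[of "-b" a z] by (simp add: algebra_simps)
qed

lemma J_orthogonal_pair:
  assumes hx: "inner h x0 = 0" and hv: "inner h v0 = 0"
  shows "J h x0 = 0" "J h v0 = 0"
proof -
  have vh: "inner v0 h = 0" and xh: "inner x0 h = 0" using hx hv by (simp_all add: inner_commute)
  define z where "z = J h x0"
  have "J v0 z = J h (J v0 x0)" unfolding z_def by (rule J_commute[OF vh])
  also have "\<dots> = l *\<^sub>R z" unfolding z_def using J_v0[of x0] x0_unit J_lin_simps by simp
  finally have "(l * inner z x0) *\<^sub>R x0 = l *\<^sub>R z" using J_v0[of z] by simp
  hence zz: "z = inner z x0 *\<^sub>R x0" using l_nonzero by (metis scaleR_scaleR scaleR_cancel_left)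
  have "inner z x0 = R x0 h h x0" unfolding z_def by simp
  also have "\<dots> = R h x0 x0 h" by (rule R_pair_sym)
  also have "\<dots> = 0" using R_x0[of h h] hv by simp
  finally show "J h x0 = 0" using zz z_def by simp
next
  have vh: "inner v0 h = 0" and xh: "inner x0 h = 0" using hx hv by (simp_all add: inner_commute)
  define z where "z = J h v0"
  have "J x0 z = J h (J x0 v0)" unfolding z_def by (rule J_commute[OF xh])
  also have "\<dots> = l *\<^sub>R z" unfolding z_def using J_x0_v0 J_lin_simps by simp
  finally have "(l * inner z v0) *\<^sub>R v0 = l *\<^sub>R z" using J_x0[of z] by simp
  hence zz: "z = inner z v0 *\<^sub>R v0" using l_nonzero by (metis scaleR_scaleR scaleR_cancel_left)
  have "inner z v0 = R v0 h h v0" unfolding z_def by simp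
  also have "\<dots> = R h v0 v0 h" by (rule R_pair_sym)
  also have "\<dots> = 0" using R_v0[of h h] hx by simp
  finally show "J h v0 = 0" using zz z_def by simp
qed

lemma J_orthogonal_pair_nonzero:
  assumes ff: "inner f f = 1" and fx: "inner f x0 = 0" and fv: "inner f v0 = 0"
  shows "\<exists>z. J f z \<noteq> 0"
proof (rule ccontr)
  assume "\<not> (\<exists>z. J f z \<noteq> 0)"
  hence Z: "J f z = 0" for z by auto
  define y1 where "y1 = x0 + f"
  define y2 where "y2 = x0 - f"
  have xf: "inner x0 f = 0" and vf: "inner v0 f = 0" using fx fv by (simp_all add: inner_commute)
  have y12: "inner y1 y2 = 0" unfolding y1_def y2_def using x0_unit ff xf fx
    by (simp add: inner_add_left inner_diff_right)
  have KJ: "inner (J y v0) v0 = l * inner y x0 * inner y x0" for y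
  proof -
    have "inner (J y v0) v0 = R v0 y y v0" by simp
    also have "\<dots> = R y v0 v0 y" by (rule R_pair_sym)
    finally show ?thesis using R_v0[of y y] by (simp add: inner_commute)
  qed
  have y1x: "inner y1 x0 = 1" unfolding y1_def using x0_unit fx by (simp add: inner_add_left)
  have y2x: "inner y2 x0 = 1" unfolding y2_def using x0_unit fx by (simp add: inner_diff_left)
  have "J y1 v0 \<noteq> 0" using KJ[of y1] y1x l_nonzero by (metis inner_zero_left mult_1_right)
  then obtain m1 e1 where m1: "m1 \<noteq> 0" and e1: "inner e1 e1 = 1"
      and J1: "\<And>z. J y1 z = (m1 * inner z e1) *\<^sub>R e1"
    using J_rank_one by blast
  have "J y2 v0 \<noteq> 0" using KJ[of y2] y2x l_nonzero by (metis inner_zero_left mult_1_right)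
  then obtain m2 e2 where m2: "m2 \<noteq> 0" and e2: "inner e2 e2 = 1"
      and J2: "\<And>z. J y2 z = (m2 * inner z e2) *\<^sub>R e2"
    using J_rank_one by blast
  have sum: "J y1 z + J y2 z = (2 * l * inner z v0) *\<^sub>R v0" for z
  proof -
    have "J y1 z + J y2 z = 2 *\<^sub>R J x0 z" unfolding y1_def y2_def J_add_left J_diff_left
      using Z[of z]
      by (simp add: scaleR_2)
    thus ?thesis using J_x0[of z] by simp
  qed
  obtain s where es: "e1 = s *\<^sub>R v0"
    using rank_one_sum_parallel[OF J1 J2 e1 e2 m1 m2 y12 sum v0_unit] l_nonzero by auto
  have s0: "s \<noteq> 0" using es e1 by auto
  have Jy1v: "J y1 v0 = (m1 * s * s) *\<^sub>R v0" using J1[of v0] es v0_unit by simp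
  have yv: "inner y1 v0 = 0" unfolding y1_def using x0_v0 fv by (simp add: inner_add_left)
  have k0: "m1 * s * s \<noteq> 0" using m1 s0 by simp
  have "inner y1 y1 *\<^sub>R J v0 y1 = (m1 * s * s * inner v0 v0) *\<^sub>R y1"
    by (rule J_eigvec_swap[OF yv Jy1v k0])
  moreover have "J v0 y1 = l *\<^sub>R x0" using J_v0[of y1] y1x by simp
  ultimately have A: "(inner y1 y1 * l) *\<^sub>R x0 = (m1 * s * s) *\<^sub>R y1" using v0_unit by simp
  have "inner ((inner y1 y1 * l) *\<^sub>R x0) f = 0" using xf by simp
  moreover have "inner ((m1 * s * s) *\<^sub>R y1) f = m1 * s * s"
    unfolding y1_def using xf ff by (simp add: inner_add_left)
  ultimately have "m1 * s * s = 0" using A by metis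
  thus False using k0 by simp
qed

lemma rank_one_partner_orthogonal:
  assumes fx: "inner f x0 = 0" and fv: "inner f v0 = 0"
    and Jf: "\<And>z. J f z = (lf * inner z g) *\<^sub>R g" and gg: "inner g g = 1" and lf0: "lf \<noteq> 0"
  shows "inner x0 g = 0" "inner v0 g = 0" "inner f g = 0"
proof -
  have "inner (J f x0) x0 = R x0 f f x0" by simp
  also have "\<dots> = R f x0 x0 f" by (rule R_pair_sym)
  also have "\<dots> = 0" using R_x0[of f f] fv by simp
  finally have "lf * inner x0 g * inner x0 g = 0" using Jf[of x0] by (simp add: inner_commute)
  thus "inner x0 g = 0" using lf0 by simp
  have "inner (J f v0) v0 = R v0 f f v0" by simp
  also have "\<dots> = R f v0 v0 f" by (rule R_pair_sym)
  also have "\<dots> = 0" using R_v0[of f f] fx by simp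
  finally have "lf * inner v0 g * inner v0 g = 0" using Jf[of v0] by (simp add: inner_commute)
  thus "inner v0 g = 0" using lf0 by simp
  have "(lf * inner f g) *\<^sub>R g = 0" using Jf[of f] J_self by simp
  thus "inner f g = 0" using lf0 gg by auto
qed

lemma Jpol_pair_orthogonal:
  assumes ff: "inner f f = 1" and fx: "inner f x0 = 0" and fv: "inner f v0 = 0"
    and Jf: "\<And>z. J f z = (lf * inner z g) *\<^sub>R g" and gg: "inner g g = 1" and lf: "lf \<noteq> 0"
    and ab: "a * a + b * b = 1"
  shows "lf = l \<and> (\<exists>\<sigma>. \<sigma> * \<sigma> = 1 \<and> (\<forall>z. Jpol (a *\<^sub>R x0 + b *\<^sub>R v0) f z =
            (\<sigma> * l) *\<^sub>R (inner z (a *\<^sub>R v0 - b *\<^sub>R x0) *\<^sub>R g + inner z g *\<^sub>R (a *\<^sub>R v0 - b *\<^sub>R x0))))"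
proof (rule Jpol_rank_one_pairs)
  note g = rank_one_partner_orthogonal[OF fx fv Jf gg lf]
  show "inner (a *\<^sub>R x0 + b *\<^sub>R v0) (a *\<^sub>R x0 + b *\<^sub>R v0) = 1"
    "inner (a *\<^sub>R v0 - b *\<^sub>R x0) (a *\<^sub>R v0 - b *\<^sub>R x0) = 1"
    using x0_unit v0_unit x0_v0 v0_x0 ab
      by (simp_all add: inner_diff_left inner_diff_right algebra_simps)
  show "inner (a *\<^sub>R x0 + b *\<^sub>R v0) f = 0" "inner (a *\<^sub>R v0 - b *\<^sub>R x0) g = 0"
    using fx fv g by (simp_all add: inner_diff_left algebra_simps inner_commute)
  show "J g (a *\<^sub>R x0 + b *\<^sub>R v0) = 0"
    using J_orthogonal_pair[of g] g by (simp add: J_lin_simps inner_commute)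
qed (use ff gg Jf lf l_nonzero J_pair_span J_pair_span' in auto)

text \<open>The sign \<open>\<sigma>\<close> in \<open>Jpol_pair_orthogonal\<close> does not depend on the unit vector of
  \<open>span {x0, v0}\<close>: compare \<open>x0\<close>, \<open>v0\<close> and \<open>(x0 + v0) / \<surd>2\<close> using linearity of \<open>Jpol\<close>.\<close>
lemma Jpol_pair_signs:
  assumes ff: "inner f f = 1" and fx: "inner f x0 = 0" and fv: "inner f v0 = 0"
    and Jf: "\<And>z. J f z = (lf * inner z g) *\<^sub>R g" and gg: "inner g g = 1" and lf0: "lf \<noteq> 0"
  shows "lf = l \<and> (\<exists>s. s * s = 1 \<and> (\<forall>z. Jpol x0 f z = (s * l) *\<^sub>R (inner z v0 *\<^sub>R g + inner z g *\<^sub>R v0)) \<and>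
    (\<forall>z. Jpol v0 f z = (- (s * l)) *\<^sub>R (inner z x0 *\<^sub>R g + inner z g *\<^sub>R x0)))"
proof -
  note gp = rank_one_partner_orthogonal[OF fx fv Jf gg lf0]
  have gx: "inner g x0 = 0" and gv: "inner g v0 = 0" using gp by (simp_all add: inner_commute)
  have h1: "(1::real) * 1 + 0 * 0 = 1" "(0::real) * 0 + 1 * 1 = 1" by simp_all
  obtain s1 where lfl: "lf = l" and s1: "s1 * s1 = 1" and J1:
    "\<forall>z. Jpol (1 *\<^sub>R x0 + 0 *\<^sub>R v0) f z = (s1 * l) *\<^sub>R (inner z (1 *\<^sub>R v0 - 0 *\<^sub>R x0) *\<^sub>R g + inner z g *\<^sub>R (1 *\<^sub>R v0 - 0 *\<^sub>R x0))"
    using Jpol_pair_orthogonal[OF ff fx fv Jf gg lf0 h1(1)] by blast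
  obtain s2 where s2: "s2 * s2 = 1" and J2:
    "\<forall>z. Jpol (0 *\<^sub>R x0 + 1 *\<^sub>R v0) f z = (s2 * l) *\<^sub>R (inner z (0 *\<^sub>R v0 - 1 *\<^sub>R x0) *\<^sub>R g + inner z g *\<^sub>R (0 *\<^sub>R v0 - 1 *\<^sub>R x0))"
    using Jpol_pair_orthogonal[OF ff fx fv Jf gg lf0 h1(2)] by blast
  define c :: real where "c = sqrt (1/2)"
  have cc: "c * c = 1/2" unfolding c_def by simp
  have c0: "c \<noteq> 0" using cc by auto
  have hc: "c * c + c * c = 1" using cc by simp
  obtain s3 where s3: "s3 * s3 = 1" and J3:
    "\<forall>z. Jpol (c *\<^sub>R x0 + c *\<^sub>R v0) f z = (s3 * l) *\<^sub>R (inner z (c *\<^sub>R v0 - c *\<^sub>R x0) *\<^sub>R g + inner z g *\<^sub>R (c *\<^sub>R v0 - c *\<^sub>R x0))"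
    using Jpol_pair_orthogonal[OF ff fx fv Jf gg lf0 hc] by blast
  have J1': "Jpol x0 f z = (s1 * l) *\<^sub>R (inner z v0 *\<^sub>R g + inner z g *\<^sub>R v0)" for z
    using spec[OF J1, of z] by simp
  have J2': "Jpol v0 f z = (- (s2 * l)) *\<^sub>R (inner z x0 *\<^sub>R g + inner z g *\<^sub>R x0)" for z
    using spec[OF J2, of z] by (simp add: inner_minus_right scaleR_add_right scaleR_diff_right)
  have lin: "Jpol (c *\<^sub>R x0 + c *\<^sub>R v0) f g = c *\<^sub>R Jpol x0 f g + c *\<^sub>R Jpol v0 f g"
    by (simp add: Jpol_add_left Jpol_scale_left)
  have A: "(s3 * l) *\<^sub>R (c *\<^sub>R v0 - c *\<^sub>R x0) = c *\<^sub>R ((s1 * l) *\<^sub>R v0) + c *\<^sub>R ((- (s2 * l)) *\<^sub>R x0)"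
    using lin spec[OF J3, of g] J1'[of g] J2'[of g] gg gx gv by (simp add: inner_diff_right)
  have "inner ((s3 * l) *\<^sub>R (c *\<^sub>R v0 - c *\<^sub>R x0)) v0 = inner (c *\<^sub>R ((s1 * l) *\<^sub>R v0) + c *\<^sub>R ((- (s2 * l)) *\<^sub>R x0)) v0"
    using A by simp
  hence "s3 * l * c = c * s1 * l" using v0_unit x0_v0 by (simp add: inner_diff_left inner_add_left)
  hence s31: "s3 = s1" using c0 l_nonzero by simp
  have "inner ((s3 * l) *\<^sub>R (c *\<^sub>R v0 - c *\<^sub>R x0)) x0 = inner (c *\<^sub>R ((s1 * l) *\<^sub>R v0) + c *\<^sub>R ((- (s2 * l)) *\<^sub>R x0)) x0"
    using A by simp
  hence "s3 * l * c = c * s2 * l" using x0_unit v0_x0 by (simp add: inner_diff_left inner_add_left)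
  hence s32: "s3 = s2" using c0 l_nonzero by simp
  thus ?thesis using lfl s1 J1' J2' s31 by auto
qed

lemma orthogonal_partner:
  assumes ff: "inner f f = 1" and fx: "inner f x0 = 0" and fv: "inner f v0 = 0"
  shows "\<exists>g. inner g g = 1 \<and> inner x0 g = 0 \<and> inner v0 g = 0 \<and> inner f g = 0 \<and>
     (\<forall>z. J f z = (l * inner z g) *\<^sub>R g) \<and>
     (\<forall>z. Jpol x0 f z = l *\<^sub>R (inner z v0 *\<^sub>R g + inner z g *\<^sub>R v0)) \<and>
     (\<forall>z. Jpol v0 f z = (- l) *\<^sub>R (inner z x0 *\<^sub>R g + inner z g *\<^sub>R x0))"
proof -
  obtain z0 where "J f z0 \<noteq> 0" using J_orthogonal_pair_nonzero[OF ff fx fv] by blast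
  then obtain lf g where lf0: "lf \<noteq> 0" and gg: "inner g g = 1"
      and Jf: "\<And>z. J f z = (lf * inner z g) *\<^sub>R g"
    using J_rank_one by blast
  note gp = rank_one_partner_orthogonal[OF fx fv Jf gg lf0]
  obtain s1 where lfl: "lf = l" and s1: "s1 * s1 = 1"
    and J1': "\<And>z. Jpol x0 f z = (s1 * l) *\<^sub>R (inner z v0 *\<^sub>R g + inner z g *\<^sub>R v0)"
    and J2': "\<And>z. Jpol v0 f z = (- (s1 * l)) *\<^sub>R (inner z x0 *\<^sub>R g + inner z g *\<^sub>R x0)"
    using Jpol_pair_signs[OF ff fx fv Jf gg lf0] by blast
  define g' where "g' = s1 *\<^sub>R g"
  have g'g': "inner g' g' = 1" unfolding g'_def using gg s1 by simp
  have "inner x0 g' = 0" "inner v0 g' = 0" "inner f g' = 0" unfolding g'_def using gp by simp_all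
  moreover have "J f z = (l * inner z g') *\<^sub>R g'" for z
    unfolding g'_def using Jf[of z] lfl s1 by (simp add: algebra_simps)
  moreover have "Jpol x0 f z = l *\<^sub>R (inner z v0 *\<^sub>R g' + inner z g' *\<^sub>R v0)" for z
    unfolding g'_def using J1'[of z] by (simp add: algebra_simps)
  moreover have "Jpol v0 f z = (- l) *\<^sub>R (inner z x0 *\<^sub>R g' + inner z g' *\<^sub>R x0)" for z
    unfolding g'_def using J2'[of z] by (simp add: algebra_simps)
  ultimately show ?thesis using g'g' by blast
qed

text \<open>Chosen so that \<open>Theta x0 = v0\<close> and \<open>Theta f = g\<close> for the partner \<open>g\<close> of a unit
  \<open>f \<perp> x0, v0\<close> given by \<open>orthogonal_partner\<close>.\<close>
definition Theta :: "'a \<Rightarrow> 'a" where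
  "Theta y = (1/l) *\<^sub>R Jpol y x0 v0 - inner y x0 *\<^sub>R v0"

lemma Theta_add: "Theta (u + w) = Theta u + Theta w"
  unfolding Theta_def
  by (simp add: Jpol_add_left inner_add_left scaleR_add_right scaleR_add_left algebra_simps)

lemma Theta_scale: "Theta (c *\<^sub>R u) = c *\<^sub>R Theta u"
  unfolding Theta_def
  by (simp add: Jpol_scale_left scaleR_diff_right)

lemma linear_Theta: "linear Theta"
  by (rule linearI) (simp_all add: Theta_add Theta_scale)

lemma Theta_0: "Theta 0 = 0"
  using linear_0[OF linear_Theta] .

lemma Theta_x0: "Theta x0 = v0"
  unfolding Theta_def Jpol_self using J_x0_v0 x0_unit l_nonzero by (simp add: scaleR_2)

lemma Theta_v0: "Theta v0 = - x0"
  unfolding Theta_def using Jpol_first[of v0 x0] J_v0[of x0] x0_unit v0_x0 l_nonzero by simp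

lemma Theta_orthogonal_pair:
  assumes hx: "inner h x0 = 0" and hv: "inner h v0 = 0"
  shows "inner (Theta h) x0 = 0 \<and> inner (Theta h) v0 = 0 \<and> inner (Theta h) h = 0 \<and> inner (Theta h) (Theta h) = inner h h \<and>
     (\<forall>z. J h z = (l * inner z (Theta h)) *\<^sub>R Theta h) \<and>
     (\<forall>z. Jpol x0 h z = l *\<^sub>R (inner z v0 *\<^sub>R Theta h + inner z (Theta h) *\<^sub>R v0)) \<and>
     (\<forall>z. Jpol v0 h z = (- l) *\<^sub>R (inner z x0 *\<^sub>R Theta h + inner z (Theta h) *\<^sub>R x0))"
proof (cases "h = 0")
  case True
  have "Jpol x0 0 z = 0" "Jpol v0 0 z = 0" for z
    using Jpol_scale_right[of x0 0 x0 z] Jpol_scale_right[of v0 0 x0 z] by simp_all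
  thus ?thesis using True Theta_0 by (simp add: J_zero_left)
next
  case False
  define n where "n = norm h"
  have n0: "n \<noteq> 0" unfolding n_def using False by simp
  define f where "f = (1/n) *\<^sub>R h"
  have hf: "h = n *\<^sub>R f" unfolding f_def using n0 by simp
  have ff: "inner f f = 1" unfolding f_def n_def using False
    by (simp add: power2_norm_eq_inner[symmetric] power2_eq_square)
  have fx: "inner f x0 = 0" and fv: "inner f v0 = 0" unfolding f_def using hx hv by simp_all
  obtain g where gg: "inner g g = 1" and gx: "inner x0 g = 0" and gv: "inner v0 g = 0"
      and gf: "inner f g = 0"
    and Jf: "\<forall>z. J f z = (l * inner z g) *\<^sub>R g"
    and Jpolx: "\<forall>z. Jpol x0 f z = l *\<^sub>R (inner z v0 *\<^sub>R g + inner z g *\<^sub>R v0)"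
    and Jpolv: "\<forall>z. Jpol v0 f z = (- l) *\<^sub>R (inner z x0 *\<^sub>R g + inner z g *\<^sub>R x0)"
    using orthogonal_partner[OF ff fx fv] by blast
  have Thf: "Theta f = g" unfolding Theta_def
    using spec[OF Jpolx, of v0] Jpol_commute[of f x0 v0] fx v0_unit gv l_nonzero
    by (simp add: inner_commute)
  have Thh: "Theta h = n *\<^sub>R g" unfolding hf Theta_scale Thf ..
  show ?thesis unfolding Thh
  proof (intro conjI allI)
    show "inner (n *\<^sub>R g) x0 = 0" using gx by (simp add: inner_commute)
    show "inner (n *\<^sub>R g) v0 = 0" using gv by (simp add: inner_commute)
    show "inner (n *\<^sub>R g) h = 0" unfolding hf using gf by (simp add: inner_commute)
    show "inner (n *\<^sub>R g) (n *\<^sub>R g) = inner h h" unfolding hf using gg ff by simp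
    fix z
    show "J h z = (l * inner z (n *\<^sub>R g)) *\<^sub>R n *\<^sub>R g" unfolding hf J_scale_left spec[OF Jf, of z]
      by (rule vector_eq_innerI) (simp add: algebra_simps)
    show "Jpol x0 h z = l *\<^sub>R (inner z v0 *\<^sub>R n *\<^sub>R g + inner z (n *\<^sub>R g) *\<^sub>R v0)"
      unfolding hf Jpol_scale_right spec[OF Jpolx, of z]
        by (rule vector_eq_innerI) (simp add: inner_add_left algebra_simps)
    show "Jpol v0 h z = (- l) *\<^sub>R (inner z x0 *\<^sub>R n *\<^sub>R g + inner z (n *\<^sub>R g) *\<^sub>R x0)"
      unfolding hf Jpol_scale_right spec[OF Jpolv, of z]
        by (rule vector_eq_innerI) (simp add: inner_add_left algebra_simps)
  qed
qed

lemma pair_decomp: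
  fixes y :: 'a
  defines "a \<equiv> inner y x0" and "b \<equiv> inner y v0"
  defines "h \<equiv> y - (a *\<^sub>R x0 + b *\<^sub>R v0)"
  shows "y = (a *\<^sub>R x0 + b *\<^sub>R v0) + h" "inner h x0 = 0" "inner h v0 = 0"
    "Theta y = (a *\<^sub>R v0 - b *\<^sub>R x0) + Theta h"
proof -
  show "y = (a *\<^sub>R x0 + b *\<^sub>R v0) + h" unfolding h_def by simp
  show "inner h x0 = 0" unfolding h_def a_def b_def using x0_unit v0_x0
    by (simp add: inner_diff_left inner_add_left)
  show "inner h v0 = 0" unfolding h_def a_def b_def using v0_unit x0_v0
    by (simp add: inner_diff_left inner_add_left)
  have "Theta y = Theta (a *\<^sub>R x0 + b *\<^sub>R v0) + Theta h" unfolding h_def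
    by (simp add: Theta_add[symmetric])
  thus "Theta y = (a *\<^sub>R v0 - b *\<^sub>R x0) + Theta h"
    by (simp add: Theta_add Theta_scale Theta_x0 Theta_v0)
qed

lemma J_Theta: "J y z = (l * inner z (Theta y)) *\<^sub>R Theta y"
proof -
  define a where "a = inner y x0"
  define b where "b = inner y v0"
  define h where "h = y - (a *\<^sub>R x0 + b *\<^sub>R v0)"
  note d = pair_decomp[of y, folded a_def b_def, folded h_def]
  define p where "p = a *\<^sub>R x0 + b *\<^sub>R v0"
  define q where "q = a *\<^sub>R v0 - b *\<^sub>R x0"
  note P = Theta_orthogonal_pair[OF d(2) d(3)]
  have Jp: "J p z = (l * inner z q) *\<^sub>R q" unfolding p_def q_def by (rule J_pair_span)
  have Px: "Jpol x0 h z = l *\<^sub>R (inner z v0 *\<^sub>R Theta h + inner z (Theta h) *\<^sub>R v0)" using P by blast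
  have Pv: "Jpol v0 h z = (- l) *\<^sub>R (inner z x0 *\<^sub>R Theta h + inner z (Theta h) *\<^sub>R x0)" using P
    by blast
  have Jpolph: "Jpol p h z = l *\<^sub>R (inner z q *\<^sub>R Theta h + inner z (Theta h) *\<^sub>R q)"
  proof -
    have "Jpol p h z = a *\<^sub>R Jpol x0 h z + b *\<^sub>R Jpol v0 h z" unfolding p_def
      by (simp add: Jpol_add_left Jpol_scale_left)
    also have "\<dots> = l *\<^sub>R (inner z q *\<^sub>R Theta h + inner z (Theta h) *\<^sub>R q)"
      unfolding Px Pv q_def
      by (rule vector_eq_innerI) (simp add: inner_add_left inner_diff_left inner_diff_right algebra_simps)
    finally show ?thesis .
  qed
  have Jh: "J h z = (l * inner z (Theta h)) *\<^sub>R Theta h" using P by blast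
  have "J y z = J p z + Jpol p h z + J h z" using d(1) J_add_left unfolding p_def by metis
  also have "\<dots> = (l * inner z (q + Theta h)) *\<^sub>R (q + Theta h)"
    unfolding Jp Jpolph Jh
      by (rule vector_eq_innerI) (simp add: inner_add_left inner_add_right algebra_simps)
  also have "q + Theta h = Theta y" using d(4) unfolding q_def by simp
  finally show ?thesis .
qed

lemma inner_Theta_self: "inner (Theta y) y = 0" "inner (Theta y) (Theta y) = inner y y"
proof -
  define a where "a = inner y x0"
  define b where "b = inner y v0"
  define h where "h = y - (a *\<^sub>R x0 + b *\<^sub>R v0)"
  note d = pair_decomp[of y, folded a_def b_def, folded h_def]
  note P = Theta_orthogonal_pair[OF d(2) d(3)]
  have hx: "inner x0 h = 0" and hv: "inner v0 h = 0" using d(2) d(3)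
    by (simp_all add: inner_commute)
  have tx: "inner x0 (Theta h) = 0" and tv: "inner v0 (Theta h) = 0" using P
    by (simp_all add: inner_commute)
  have e1: "inner (Theta y) y = inner ((a *\<^sub>R v0 - b *\<^sub>R x0) + Theta h) ((a *\<^sub>R x0 + b *\<^sub>R v0) + h)"
    using d(1) d(4) by metis
  have e2: "inner (Theta y) (Theta y) = inner ((a *\<^sub>R v0 - b *\<^sub>R x0) + Theta h) ((a *\<^sub>R v0 - b *\<^sub>R x0) + Theta h)"
    using d(4) by metis
  have e3: "inner y y = inner ((a *\<^sub>R x0 + b *\<^sub>R v0) + h) ((a *\<^sub>R x0 + b *\<^sub>R v0) + h)"
    using d(1) by metis
  have th: "inner (Theta h) x0 = 0" "inner (Theta h) v0 = 0" "inner (Theta h) h = 0" "inner (Theta h) (Theta h) = inner h h"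
    using P by blast+
  show "inner (Theta y) y = 0"
    unfolding e1 using th hx hv x0_unit v0_unit x0_v0 v0_x0 tx tv
    by (simp add: inner_add_left inner_add_right inner_diff_left inner_diff_right algebra_simps)
  show "inner (Theta y) (Theta y) = inner y y"
    unfolding e2 e3 using th hx hv tx tv x0_unit v0_unit x0_v0 v0_x0
    by (simp add: inner_add_left inner_add_right inner_diff_left inner_diff_right inner_commute algebra_simps)
qed

lemma hermitian_acs_Theta: "hermitian_acs Theta"
proof -
  have sk: "inner (Theta u) w = - inner u (Theta w)" for u w
  proof -
    have "inner (Theta (u + w)) (u + w) = 0" by (rule inner_Theta_self(1))
    hence "inner (Theta u) u + inner (Theta u) w + inner (Theta w) u + inner (Theta w) w = 0"
      by (simp add: Theta_add inner_add_left inner_add_right)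
    thus ?thesis using inner_Theta_self(1)[of u] inner_Theta_self(1)[of w]
      by (simp add: inner_commute)
  qed
  have iso: "inner (Theta u) (Theta w) = inner u w" for u w
  proof -
    have "inner (Theta (u + w)) (Theta (u + w)) = inner (u + w) (u + w)"
      by (rule inner_Theta_self(2))
    hence "inner (Theta u) (Theta u) + 2 * inner (Theta u) (Theta w) + inner (Theta w) (Theta w) = inner u u + 2 * inner u w + inner w w"
      by (simp add: Theta_add inner_add_left inner_add_right inner_commute)
    thus ?thesis using inner_Theta_self(2)[of u] inner_Theta_self(2)[of w] by simp
  qed
  have sq: "Theta (Theta x) = - x" for x
  proof (rule vector_eq_innerI)
    fix w
    have "inner (Theta (Theta x)) w = - inner (Theta x) (Theta w)" by (rule sk)
    also have "\<dots> = - inner x w" by (simp add: iso)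
    finally show "inner (Theta (Theta x)) w = inner (- x) w" by simp
  qed
  show ?thesis unfolding hermitian_acs_def using linear_Theta sq sk by blast
qed

lemma R_eq_RTheta_Theta: "R = (\<lambda>x y z w. (l/3) * RTheta Theta x y z w)"
proof (rule alg_curv_tensor_eqI[OF alg_curv alg_curv_tensor_scale[OF alg_curv_tensor_RTheta[OF hermitian_acs_Theta]]])
  fix z y w
  note hp = hermitian_acsD[OF hermitian_acs_Theta]
  have "R z y y w = inner (J y z) w" by simp
  also have "\<dots> = l * inner z (Theta y) * inner (Theta y) w" unfolding J_Theta by simp
  also have "RTheta Theta z y y w = 3 * inner z (Theta y) * inner (Theta y) w"
    unfolding RTheta_expand using hp(5)[of y] hp(3)[of z y] by simp
  hence "l * inner z (Theta y) * inner (Theta y) w = (l/3) * RTheta Theta z y y w" by simp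
  finally show "R z y y w = (l/3) * RTheta Theta z y y w" .
qed

end

lemma (in jt_simple_eigenvalues) unit_rank_one_pair_exists:
  assumes nz: "J x z0 \<noteq> 0"
  obtains x1 e l where "inner x1 x1 = 1" "inner e e = 1" "inner x1 e = 0" "l \<noteq> 0"
    "\<And>z. J x1 z = (l * inner z e) *\<^sub>R e"
proof -
  obtain m e where m: "m \<noteq> 0" and ee: "inner e e = 1" and Jx: "\<And>z. J x z = (m * inner z e) *\<^sub>R e"
    using J_rank_one[OF nz] by blast
  have "x \<noteq> 0" using nz by auto
  define x1 where "x1 = (1 / norm x) *\<^sub>R x"
  have "inner x1 x1 = 1" unfolding x1_def using \<open>x \<noteq> 0\<close>
    by (simp add: power2_norm_eq_inner[symmetric] power2_eq_square)
  moreover have "inner x1 e = 0"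
    unfolding x1_def using J_eigvec_orthogonal[of x e m] Jx[of e] ee m by simp
  moreover have "J x1 z = (m / (norm x * norm x) * inner z e) *\<^sub>R e" for z
    unfolding x1_def J_scale_left Jx by simp
  moreover have "m / (norm x * norm x) \<noteq> 0" using m \<open>x \<noteq> 0\<close> by simp
  ultimately show ?thesis using that ee by blast
qed

lemma (in jacobi_tsankov_tensor) jacobi_tsankov_classification:
  assumes dim: "DIM('a) \<ge> 3"
  shows "(\<exists>c::real. R = (\<lambda>x y z w. c * R0 x y z w)) \<or>
         (\<exists>(c::real) \<Theta>. hermitian_acs \<Theta> \<and> R = (\<lambda>x y z w. c * RTheta \<Theta> x y z w))"
proof (cases "\<exists>x l v1 v2. l \<noteq> 0 \<and> J x v1 = l *\<^sub>R v1 \<and> J x v2 = l *\<^sub>R v2 \<and> inner v1 v2 = 0 \<and>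
    v1 \<noteq> 0 \<and> v2 \<noteq> 0")
  case True
  then obtain x l v1 v2 where "l \<noteq> 0" "J x v1 = l *\<^sub>R v1" "v1 \<noteq> 0" "J x v2 = l *\<^sub>R v2" "v2 \<noteq> 0"
    "inner v1 v2 = 0"
    by blast
  moreover from this have "x \<noteq> 0" by auto
  ultimately have "const_curv_at x (l / inner x x)" "l / inner x x \<noteq> 0" "x \<noteq> 0"
    using const_curv_at_if_multiple_eigenvalue by auto
  thus ?thesis using R_eq_R0_if_const_curv_at[OF dim] by blast
next
  case False
  interpret jt_simple_eigenvalues R by unfold_locales (use False in blast)
  show ?thesis
  proof (cases "\<forall>x z. J x z = 0")
    case True
    thus ?thesis using J_eq_0_imp_R_eq_0 by (metis mult_zero_left)
  next
    case False
    then obtain x1 e l where "inner x1 x1 = 1" "inner e e = 1" "inner x1 e = 0" "l \<noteq> 0"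
      "\<And>z. J x1 z = (l * inner z e) *\<^sub>R e"
      using unit_rank_one_pair_exists by blast
    then interpret jt_rank_one_pair R x1 e l by unfold_locales
    show ?thesis using R_eq_RTheta_Theta hermitian_acs_Theta by blast
  qed
qed

theorem theorem1p3:
  assumes "DIM('a::euclidean_space) \<ge> 3"
  shows "(\<forall>R :: 'a \<Rightarrow> 'a \<Rightarrow> 'a \<Rightarrow> 'a \<Rightarrow> real.
            alg_curv_tensor R \<and>
            (\<forall>x y. jacobi_op R x \<circ> jacobi_op R y = jacobi_op R y \<circ> jacobi_op R x)
            \<longrightarrow> R = (\<lambda>x y z w. 0))
       \<and> (jacobi_tsankov (R0 :: 'a \<Rightarrow> 'a \<Rightarrow> 'a \<Rightarrow> 'a \<Rightarrow> real)
          \<and> (\<forall>\<Theta> :: 'a \<Rightarrow> 'a. hermitian_acs \<Theta> \<longrightarrow> jacobi_tsankov (RTheta \<Theta>)))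
       \<and> (\<forall>R :: 'a \<Rightarrow> 'a \<Rightarrow> 'a \<Rightarrow> 'a \<Rightarrow> real.
            alg_curv_tensor R \<and> jacobi_tsankov R \<longrightarrow>
              (\<exists>c::real. R = (\<lambda>x y z w. c * R0 x y z w)) \<or>
              (\<exists>(c::real) \<Theta>. hermitian_acs \<Theta> \<and> R = (\<lambda>x y z w. c * RTheta \<Theta> x y z w)))"
  using curvature_tensor.jacobi_commuting_imp_zero[OF curvature_tensor.intro]
    jacobi_tsankov_R0 jacobi_tsankov_RTheta
    jacobi_tsankov_tensor.jacobi_tsankov_classification[OF jacobi_tsankov_tensor.intro, OF
      curvature_tensor.intro jacobi_tsankov_tensor_axioms.intro, OF _ _ assms]
  by blast

end
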